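(* In Smoluchowski's discrete model (defined in the context), let $\tau$ be a gelation stopping time. Then, conditionally on $\tau$ and $S(\tau)$ (on $\{\tau<\infty\}$), the configuration in solution $C(\tau)$ is distributed as an Erdős–Rényi graph on vertex set $S(\tau)$ with edge probability $p^{(N)}_\tau$, conditioned on having no connected component with at least $\alpha(N)$ vertices.
   Context: Smoluchowski's discrete model: $N\ge2$, $(\alpha(N))$ with $\alpha(N)\to\infty$, $\alpha(N)/N\to0$. Particles $[N]$; each unordered pair $\{i,j\}$ has an independent exponential clock $e_{ij}$ of parameter $1/N$; initially no links. When $e_{ij}$ rings, the link is created unless $i$ or $j$ belongs at that moment to a cluster (connected component of created links) of size $\ge\alpha(N)$, in which case it is never created. $S(t)$ is the set of particles in clusters of size $<\alpha(N)$ at time $t$; $C(t)$ is the graph on $S(t)$ with edges $\{i,j\}\subset S(t)$, $e_{ij}\le t$; $p^{(N)}_t=1-e^{-t/N}$. Filtrations: $\mathcal{F}_t=\sigma(e_{ij}\mathbf 1_{e_{ij}\le t}, i,j\in[N])$ and, for $S\subset[N]$, $\mathcal{F}^S_t=\sigma(e_{ij}\mathbf 1_{e_{ij}\le t}, i,j\in S)$. A gelation stopping time is an $(\mathcal{F}_t)$-stopping time $\tau$ such that for every $S\subset[N]$ and $t\ge0$, conditionally on $\{S(t)=S\}$, $\tau\mathbf 1_{\tau\le t}$ is independent of $\mathcal{F}^S_t$. (Example: the successive times $\tau_k$ at which a cluster of size $\ge\alpha(N)$ is formed.) *)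

theory Defs
  imports "HOL-Probability.Probability"
begin

(* Particles are 0,...,N-1; an unordered pair {i,j} is represented as (i,j) with i < j. *)
definition Pairs :: "nat \<Rightarrow> (nat \<times> nat) set" where
  "Pairs N = {(i,j). i < j \<and> j < N}"

definition Pairs_on :: "nat set \<Rightarrow> (nat \<times> nat) set" where
  "Pairs_on S = {(i,j). i < j \<and> i \<in> S \<and> j \<in> S}"

definition clock_space :: "nat \<Rightarrow> (nat \<times> nat \<Rightarrow> real) measure" where
  "clock_space N = PiM (Pairs N) (\<lambda>_. density lborel (exponential_density (1 / real N)))"

definition cluster :: "(nat \<times> nat) set \<Rightarrow> nat \<Rightarrow> nat set" where
  "cluster E v = {w. (v, w) \<in> (E \<union> E\<inverse>)\<^sup>*}"

(* order in which clocks ring (ties, a null event, broken lexicographically) *)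
definition prec :: "(nat \<times> nat \<Rightarrow> real) \<Rightarrow> nat \<times> nat \<Rightarrow> nat \<times> nat \<Rightarrow> bool" where
  "prec \<omega> f e \<longleftrightarrow> \<omega> f < \<omega> e \<or>
      (\<omega> f = \<omega> e \<and> (fst f < fst e \<or> (fst f = fst e \<and> snd f < snd e)))"

definition created :: "nat \<Rightarrow> real \<Rightarrow> (nat \<times> nat \<Rightarrow> real) \<Rightarrow> (nat \<times> nat) set" where
  "created N a \<omega> = (THE A. A \<subseteq> Pairs N \<and>
      (\<forall>e\<in>Pairs N. e \<in> A \<longleftrightarrow>
         (\<forall>v\<in>{fst e, snd e}. real (card (cluster {f\<in>A. prec \<omega> f e} v)) < a)))"

definition links :: "nat \<Rightarrow> real \<Rightarrow> (nat \<times> nat \<Rightarrow> real) \<Rightarrow> real \<Rightarrow> (nat \<times> nat) set" where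
  "links N a \<omega> t = {e \<in> created N a \<omega>. \<omega> e \<le> t}"

definition Ssol :: "nat \<Rightarrow> real \<Rightarrow> (nat \<times> nat \<Rightarrow> real) \<Rightarrow> real \<Rightarrow> nat set" where
  "Ssol N a \<omega> t = {v. v < N \<and> real (card (cluster (links N a \<omega> t) v)) < a}"

definition Csol :: "nat \<Rightarrow> real \<Rightarrow> (nat \<times> nat \<Rightarrow> real) \<Rightarrow> real \<Rightarrow> (nat \<times> nat) set" where
  "Csol N a \<omega> t = {e \<in> Pairs_on (Ssol N a \<omega> t). \<omega> e \<le> t}"

definition pN :: "nat \<Rightarrow> real \<Rightarrow> real" where
  "pN N t = 1 - exp (- t / real N)"

definition filt :: "nat \<Rightarrow> (nat \<times> nat) set \<Rightarrow> real \<Rightarrow> (nat \<times> nat \<Rightarrow> real) set set" where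
  "filt N P t = sigma_sets (space (clock_space N))
     (\<Union>e\<in>P. {(\<lambda>\<omega>. if \<omega> e \<le> t then \<omega> e else 0) -` B \<inter> space (clock_space N) | B. B \<in> sets borel})"

definition F :: "nat \<Rightarrow> real \<Rightarrow> (nat \<times> nat \<Rightarrow> real) set set" where
  "F N t = filt N (Pairs N) t"

definition FS :: "nat \<Rightarrow> nat set \<Rightarrow> real \<Rightarrow> (nat \<times> nat \<Rightarrow> real) set set" where
  "FS N S t = filt N (Pairs_on S) t"

definition gelation_stopping_time ::
  "nat \<Rightarrow> real \<Rightarrow> ((nat \<times> nat \<Rightarrow> real) \<Rightarrow> ennreal) \<Rightarrow> bool" where
  "gelation_stopping_time N a \<tau> \<longleftrightarrow>
     (\<forall>t\<ge>0. {\<omega> \<in> space (clock_space N). \<tau> \<omega> \<le> ennreal t} \<in> F N t) \<and>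
     (\<forall>S. S \<subseteq> {..<N} \<longrightarrow> (\<forall>t\<ge>0. \<forall>A \<in> sets (borel :: ennreal measure). \<forall>B \<in> FS N S t.
        (let E = {\<omega> \<in> space (clock_space N). Ssol N a \<omega> t = S};
             X = {\<omega> \<in> space (clock_space N). (if \<tau> \<omega> \<le> ennreal t then \<tau> \<omega> else 0) \<in> A}
         in measure (clock_space N) (X \<inter> B \<inter> E) * measure (clock_space N) E
            = measure (clock_space N) (X \<inter> E) * measure (clock_space N) (B \<inter> E))))"

definition no_big :: "real \<Rightarrow> nat set \<Rightarrow> (nat \<times> nat) set \<Rightarrow> bool" where
  "no_big a S G \<longleftrightarrow> (\<forall>v\<in>S. real (card (cluster G v)) < a)"

definition er_weight :: "nat set \<Rightarrow> real \<Rightarrow> (nat \<times> nat) set \<Rightarrow> real" where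
  "er_weight S p G = p ^ card G * (1 - p) ^ (card (Pairs_on S) - card G)"

definition ER_cond :: "real \<Rightarrow> nat set \<Rightarrow> real \<Rightarrow> (nat \<times> nat) set \<Rightarrow> real" where
  "ER_cond a S p G =
     (if G \<subseteq> Pairs_on S \<and> no_big a S G
      then er_weight S p G / (\<Sum>H\<in>{H. H \<subseteq> Pairs_on S \<and> no_big a S H}. er_weight S p H)
      else 0)"

end

theory Submission
  imports Defs
begin

(*
  The key fact is a locality property of the aggregation: if S(t) = S, then
  changing the clocks of the pairs inside S does not change S(t), as long as the graph of the
  pairs inside S whose clocks have rung by time t has no cluster of size at least alpha(N);
  that graph is then C(t). So at a fixed time t the event {S(t) = S, C(t) = H} is the
  intersection of {the pairs inside S rung by time t form H}, whose probability is the
  Erdos-Renyi weight p^|H| (1 - p)^(|pairs of S| - |H|), and of {S(t) = S once the clocks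
  inside S are pushed beyond t}; the two events depend on disjoint sets of independent clocks.
  This gives the conditioned Erdos-Renyi law at fixed times, and the gelation property is
  exactly the independence needed to carry it over to the events {tau <= t, tau in A}.
  Approximating tau from above by dyadic times, the result holds at each dyadic
  approximation; since the configuration is right-continuous in time, dominated convergence
  yields it at tau.
*)

section \<open>General measure theory\<close>

lemma (in finite_product_prob_space) measure_Int_disjoint_coordinates:
  assumes J: "J \<subseteq> I" and X: "X \<in> sets (PiM I M)" and Y: "Y \<in> sets (PiM I M)"
    and X_dep: "\<And>x y. x \<in> space (PiM I M) \<Longrightarrow> y \<in> space (PiM I M) \<Longrightarrow>
              (\<forall>j\<in>J. x j = y j) \<Longrightarrow> x \<in> X \<Longrightarrow> y \<in> X"
    and Y_dep: "\<And>x y. x \<in> space (PiM I M) \<Longrightarrow> y \<in> space (PiM I M) \<Longrightarrow>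
              (\<forall>j\<in>I - J. x j = y j) \<Longrightarrow> x \<in> Y \<Longrightarrow> y \<in> Y"
  shows "measure (PiM I M) (X \<inter> Y) = measure (PiM I M) X * measure (PiM I M) Y"
proof -
  define K where "K = I - J"
  define MJ where "MJ = PiM J M"
  define MK where "MK = PiM K M"
  have JK: "J \<inter> K = {}" "J \<union> K = I" using J by (auto simp: K_def)
  have fin: "finite J" "finite K" using J finite_index finite_subset unfolding K_def by auto
  interpret PJ: prob_space MJ unfolding MJ_def by (rule prob_space_PiM) (rule M.prob_space_axioms)
  interpret PK: prob_space MK unfolding MK_def by (rule prob_space_PiM) (rule M.prob_space_axioms)
  have D: "distr (MJ \<Otimes>\<^sub>M MK) (PiM I M) (merge J K) = PiM I M"
    unfolding MJ_def MK_def JK(2)[symmetric] by (rule distr_merge[OF JK(1) fin])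
  have mm: "merge J K \<in> measurable (MJ \<Otimes>\<^sub>M MK) (PiM I M)"
    unfolding MJ_def MK_def JK(2)[symmetric] by (rule measurable_merge)
  have em: "emeasure (PiM I M) Z = emeasure (MJ \<Otimes>\<^sub>M MK) (merge J K -` Z \<inter> space (MJ \<Otimes>\<^sub>M MK))"
    if "Z \<in> sets (PiM I M)" for Z
    by (subst D[symmetric]) (rule emeasure_distr[OF mm that])
  obtain x0 y0 where x0: "x0 \<in> space MJ" and y0: "y0 \<in> space MK"
    using PJ.not_empty PK.not_empty by blast
  have m1: "(\<lambda>x. merge J K (x, y0)) \<in> measurable MJ (PiM I M)"
    using y0 by (intro measurable_compose[OF _ mm] measurable_Pair) auto
  have m2: "(\<lambda>y. merge J K (x0, y)) \<in> measurable MK (PiM I M)"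
    using x0 by (intro measurable_compose[OF _ mm] measurable_Pair) auto
  \<comment> \<open>Through the decomposition \<open>merge J K\<close> of the product, \<open>X\<close> and \<open>Y\<close> become the rectangles
    \<open>XJ \<times> space MK\<close> and \<open>space MJ \<times> YK\<close>.\<close>
  define XJ where "XJ = (\<lambda>x. merge J K (x, y0)) -` X \<inter> space MJ"
  define YK where "YK = (\<lambda>y. merge J K (x0, y)) -` Y \<inter> space MK"
  have XJ: "XJ \<in> sets MJ" unfolding XJ_def using m1 X by (rule measurable_sets)
  have YK: "YK \<in> sets MK" unfolding YK_def using m2 Y by (rule measurable_sets)
  have sp: "merge J K (x, y) \<in> space (PiM I M)" if "x \<in> space MJ" "y \<in> space MK" for x y
    using measurable_space[OF mm, of "(x, y)"] that by (simp add: space_pair_measure)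
  have inX: "merge J K (x, y) \<in> X \<longleftrightarrow> x \<in> XJ" if "x \<in> space MJ" "y \<in> space MK" for x y
    unfolding XJ_def using that sp[OF that] sp[OF that(1) y0] JK
      X_dep[of "merge J K (x, y)" "merge J K (x, y0)"] X_dep[of "merge J K (x, y0)" "merge J K (x, y)"]
    by auto
  have inY: "merge J K (x, y) \<in> Y \<longleftrightarrow> y \<in> YK" if "x \<in> space MJ" "y \<in> space MK" for x y
    unfolding YK_def using that sp[OF that] sp[OF x0 that(2)] JK
      Y_dep[of "merge J K (x, y)" "merge J K (x0, y)"] Y_dep[of "merge J K (x0, y)" "merge J K (x, y)"]
    unfolding K_def by auto
  have "merge J K -` (X \<inter> Y) \<inter> space (MJ \<Otimes>\<^sub>M MK) = XJ \<times> YK"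
    using inX inY XJ_def YK_def by (auto simp: space_pair_measure)
  moreover have "merge J K -` X \<inter> space (MJ \<Otimes>\<^sub>M MK) = XJ \<times> space MK"
    using inX XJ_def by (auto simp: space_pair_measure)
  moreover have "merge J K -` Y \<inter> space (MJ \<Otimes>\<^sub>M MK) = space MJ \<times> YK"
    using inY YK_def by (auto simp: space_pair_measure)
  ultimately have
    "emeasure (PiM I M) (X \<inter> Y) = emeasure MJ XJ * emeasure MK YK"
    "emeasure (PiM I M) X = emeasure MJ XJ"
    "emeasure (PiM I M) Y = emeasure MK YK"
    using em[of "X \<inter> Y"] em[of X] em[of Y] X Y XJ YK
      PK.emeasure_pair_measure_Times[of XJ MJ YK] PK.emeasure_pair_measure_Times[of XJ MJ "space MK"]
      PK.emeasure_pair_measure_Times[of "space MJ" MJ YK]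
    by (auto simp: PJ.emeasure_space_1 PK.emeasure_space_1)
  then show ?thesis by (simp add: measure_def enn2real_mult)
qed

lemma (in prob_space) prob_Int_trivial_event:
  assumes A: "A \<in> events" and triv: "prob A = 0 \<or> prob A = 1" and X: "X \<in> events"
  shows "prob (X \<inter> A) = prob X * prob A"
  using triv
proof
  assume "prob A = 0"
  then show ?thesis using finite_measure_mono[of "X \<inter> A" A] A measure_nonneg[of M "X \<inter> A"] by simp
next
  assume A1: "prob A = 1"
  have "prob (X - A) \<le> prob (space M - A)"
    using A X sets.sets_into_space[OF X] by (intro finite_measure_mono) auto
  also have "\<dots> = 0" using prob_compl[OF A] A1 by simp
  finally have "prob (X - A) = 0" using measure_nonneg[of M "X - A"] by linarith
  moreover have "prob (X - A) = prob X - prob (X \<inter> A)"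
    using A X finite_measure_Diff[of X "X \<inter> A"] by (simp add: Diff_Int)
  ultimately show ?thesis using A1 by simp
qed

lemma (in finite_measure) measure_UN_proportional:
  fixes U V :: "nat \<Rightarrow> 'a set" and c :: "nat \<Rightarrow> real"
  assumes V: "\<And>k. V k \<in> sets M" and U: "\<And>k. U k \<in> sets M" and UV: "\<And>k. U k \<subseteq> V k"
    and disj: "disjoint_family V"
    and ratio: "\<And>k. measure M (U k) = c k * measure M (V k)" and c: "\<And>k. 0 \<le> c k"
    and f_on: "\<And>k x. x \<in> V k \<Longrightarrow> f x = c k"
    and f_off: "\<And>x. x \<in> space M \<Longrightarrow> x \<notin> (\<Union>k. V k) \<Longrightarrow> f x = 0"
  shows "measure M (\<Union>k. U k) = integral\<^sup>L M f"
proof -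
  have f_sum: "ennreal (f x) = (\<Sum>k. ennreal (c k) * indicator (V k) x)" if "x \<in> space M" for x
  proof (cases "x \<in> (\<Union>k. V k)")
    case True
    then obtain k where k: "x \<in> V k" by blast
    have "x \<notin> V j" if "j \<noteq> k" for j using disj k that by (auto simp: disjoint_family_on_def)
    then have "(\<Sum>j. ennreal (c j) * indicator (V j) x) = (\<Sum>j\<in>{k}. ennreal (c j) * indicator (V j) x)"
      by (intro suminf_finite) auto
    then show ?thesis using k f_on by simp
  next
    case False
    then show ?thesis using f_off[OF that] by simp
  qed
  have f_nonneg: "0 \<le> f x" if "x \<in> space M" for x
    using c f_on f_off[OF that] by (cases "x \<in> (\<Union>k. V k)") force+
  have [measurable]: "V k \<in> sets M" for k by (rule V)
  have "(\<lambda>x. enn2real (\<Sum>k. ennreal (c k) * indicator (V k) x)) \<in> borel_measurable M"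
    by measurable
  then have f_meas: "f \<in> borel_measurable M"
    using f_sum f_nonneg by (subst measurable_cong[where g = "\<lambda>x. enn2real (\<Sum>k. ennreal (c k) * indicator (V k) x)"])
      (auto simp flip: f_sum)
  have "emeasure M (\<Union>k. U k) = (\<Sum>k. emeasure M (U k))"
    using U disjoint_family_subset[OF disj UV] by (intro suminf_emeasure[symmetric]) auto
  also have "\<dots> = (\<Sum>k. \<integral>\<^sup>+x. ennreal (c k) * indicator (V k) x \<partial>M)"
    using V ratio c by (simp add: emeasure_eq_measure ennreal_mult nn_integral_cmult_indicator)
  also have "\<dots> = (\<integral>\<^sup>+x. ennreal (f x) \<partial>M)"
    using V by (subst nn_integral_suminf[symmetric]) (auto intro!: nn_integral_cong simp: f_sum)
  finally show ?thesis
    using f_meas f_nonneg by (simp add: measure_def integral_eq_nn_integral)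
qed

lemma (in finite_measure) measure_eq_integral_limit:
  fixes A :: "nat \<Rightarrow> 'a set" and f :: "nat \<Rightarrow> 'a \<Rightarrow> real"
  assumes [measurable]: "\<And>n. A n \<in> sets M" "B \<in> sets M" "\<And>n. f n \<in> borel_measurable M" "g \<in> borel_measurable M"
    and bound: "\<And>n x. x \<in> space M \<Longrightarrow> \<bar>f n x\<bar> \<le> 1"
    and lim_A: "\<And>x. x \<in> space M \<Longrightarrow> (\<lambda>n. indicator (A n) x :: real) \<longlonglongrightarrow> indicator B x"
    and lim_f: "\<And>x. x \<in> space M \<Longrightarrow> (\<lambda>n. f n x) \<longlonglongrightarrow> g x"
    and eq: "\<And>n. measure M (A n) = integral\<^sup>L M (f n)"
  shows "measure M B = integral\<^sup>L M g"
proof (rule LIMSEQ_unique)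
  have "(\<lambda>n. integral\<^sup>L M (indicator (A n) :: _ \<Rightarrow> real)) \<longlonglongrightarrow> integral\<^sup>L M (indicator B)"
  proof (rule integral_dominated_convergence[where w = "\<lambda>_. 1"])
    show "AE x in M. (\<lambda>n. indicator (A n) x :: real) \<longlonglongrightarrow> indicator B x"
      using lim_A by (intro AE_I2)
  qed (auto simp: indicator_def)
  then show "(\<lambda>n. measure M (A n)) \<longlonglongrightarrow> measure M B"
    by (simp add: emeasure_eq_measure)
  show "(\<lambda>n. measure M (A n)) \<longlonglongrightarrow> integral\<^sup>L M g"
    unfolding eq
  proof (rule integral_dominated_convergence[where w = "\<lambda>_. 1"])
    show "AE x in M. (\<lambda>n. f n x) \<longlonglongrightarrow> g x"
      using lim_f by (intro AE_I2)
  qed (auto simp: bound)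
qed

section \<open>Dyadic approximation from above\<close>

definition dyadic_ceiling :: "nat \<Rightarrow> real \<Rightarrow> real" where
  "dyadic_ceiling n x = of_int \<lceil>x * 2 ^ n\<rceil> / 2 ^ n"

lemma borel_measurable_dyadic_ceiling [measurable]: "dyadic_ceiling n \<in> borel_measurable borel"
  unfolding dyadic_ceiling_def by measurable

lemma dyadic_ceiling_ge: "x \<le> dyadic_ceiling n x"
  using le_of_int_ceiling[of "x * 2 ^ n"] by (simp add: dyadic_ceiling_def field_simps)

lemma dyadic_ceiling_less: "dyadic_ceiling n x < x + 1 / 2 ^ n"
proof -
  have "real_of_int \<lceil>x * 2 ^ n\<rceil> < x * 2 ^ n + 1" by linarith
  then show ?thesis by (simp add: dyadic_ceiling_def field_simps)
qed

lemma tendsto_dyadic_ceiling: "(\<lambda>n. dyadic_ceiling n x) \<longlonglongrightarrow> x"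
proof (rule real_tendsto_sandwich[OF _ _ tendsto_const])
  have "(\<lambda>n. x + (1 / 2) ^ n) \<longlonglongrightarrow> x + 0" by (intro tendsto_intros) simp
  then show "(\<lambda>n. x + 1 / 2 ^ n) \<longlonglongrightarrow> x" by (simp add: power_one_over)
qed (use dyadic_ceiling_ge dyadic_ceiling_less[THEN less_imp_le] in \<open>auto intro!: always_eventually\<close>)

lemma dyadic_ceiling_eq_nat: "0 \<le> x \<Longrightarrow> dyadic_ceiling n x = real (nat \<lceil>x * 2 ^ n\<rceil>) / 2 ^ n"
  by (simp add: dyadic_ceiling_def)

lemma dyadic_ceiling_eq_iff:
  assumes "0 \<le> x"
  shows "dyadic_ceiling n x = real k / 2 ^ n \<longleftrightarrow>
    (case k of 0 \<Rightarrow> x = 0 | Suc j \<Rightarrow> real j / 2 ^ n < x \<and> x \<le> real (Suc j) / 2 ^ n)"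
proof -
  have "dyadic_ceiling n x = real k / 2 ^ n \<longleftrightarrow> \<lceil>x * 2 ^ n\<rceil> = int k"
    unfolding dyadic_ceiling_def by (simp add: divide_cancel_right) (metis of_int_eq_iff of_int_of_nat_eq)
  also have "\<dots> \<longleftrightarrow> real k - 1 < x * 2 ^ n \<and> x * 2 ^ n \<le> real k"
    by (simp add: ceiling_eq_iff)
  also have "\<dots> \<longleftrightarrow> (case k of 0 \<Rightarrow> x = 0 | Suc j \<Rightarrow> real j / 2 ^ n < x \<and> x \<le> real (Suc j) / 2 ^ n)"
  proof (cases k)
    case 0
    have "0 \<le> x * 2 ^ n" using assms by simp
    then show ?thesis using 0 by auto
  next
    case (Suc j)
    have "real j < x * 2 ^ n \<longleftrightarrow> real j / 2 ^ n < x" "x * 2 ^ n \<le> real k \<longleftrightarrow> x \<le> real k / 2 ^ n"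
      by (simp_all add: divide_less_eq le_divide_eq)
    then show ?thesis using Suc by simp
  qed
  finally show ?thesis .
qed

section \<open>Clusters and the set of created links\<close>

lemma cluster_subset: "cluster E v \<subseteq> insert v (fst ` E \<union> snd ` E)"
proof
  fix w assume "w \<in> cluster E v"
  then have "(v, w) \<in> (E \<union> E\<inverse>)\<^sup>*" by (simp add: cluster_def)
  then show "w \<in> insert v (fst ` E \<union> snd ` E)"
    by (induction rule: rtrancl_induct) (force simp: image_iff)+
qed

lemma finite_cluster: "finite E \<Longrightarrow> finite (cluster E v)"
  using cluster_subset[of E v] by (meson finite_Un finite_imageI finite_insert finite_subset)

lemma cluster_mono: "E \<subseteq> E' \<Longrightarrow> cluster E v \<subseteq> cluster E' v"
  unfolding cluster_def by (auto intro: rtrancl_mono[THEN subsetD, rotated])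

lemma card_cluster_mono: "E \<subseteq> E' \<Longrightarrow> finite E' \<Longrightarrow> card (cluster E v) \<le> card (cluster E' v)"
  by (intro card_mono finite_cluster cluster_mono)

lemma cluster_edge: "(u, w) \<in> E \<Longrightarrow> cluster E u = cluster E w"
  unfolding cluster_def by (auto intro: rtrancl_trans)

definition no_crossing :: "nat set \<Rightarrow> (nat \<times> nat) set \<Rightarrow> bool" where
  "no_crossing S E \<longleftrightarrow> (\<forall>f\<in>E. fst f \<in> S \<longleftrightarrow> snd f \<in> S)"

lemma cluster_subset_if_same_side:
  assumes E: "no_crossing S E" and E': "{f\<in>E. fst f \<in> S \<longleftrightarrow> v \<in> S} \<subseteq> E'"
  shows "cluster E v \<subseteq> cluster E' v"
proof
  fix w assume "w \<in> cluster E v"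
  then have "(v, w) \<in> (E \<union> E\<inverse>)\<^sup>*" by (simp add: cluster_def)
  then have "(w \<in> S \<longleftrightarrow> v \<in> S) \<and> (v, w) \<in> (E' \<union> E'\<inverse>)\<^sup>*"
  proof (induction rule: rtrancl_induct)
    case (step y z)
    then have "(y, z) \<in> E \<and> (z \<in> S \<longleftrightarrow> v \<in> S) \<or> (z, y) \<in> E \<and> (z \<in> S \<longleftrightarrow> v \<in> S)"
      using E by (force simp: no_crossing_def)
    then have "(z \<in> S \<longleftrightarrow> v \<in> S) \<and> (y, z) \<in> E' \<union> E'\<inverse>"
      using E' step.IH by auto
    then show ?case using step.IH by (meson rtrancl.rtrancl_into_rtrancl)
  qed simp
  then show "w \<in> cluster E' v" by (simp add: cluster_def)
qed

lemma cluster_eq_if_same_side: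
  assumes "no_crossing S E" "no_crossing S E'"
    and "{f\<in>E. fst f \<in> S \<longleftrightarrow> v \<in> S} = {f\<in>E'. fst f \<in> S \<longleftrightarrow> v \<in> S}"
  shows "cluster E v = cluster E' v"
  using assms cluster_subset_if_same_side[of S E v E'] cluster_subset_if_same_side[of S E' v E]
  by blast

lemma prec_irrefl: "\<not> prec \<omega> e e"
  by (simp add: prec_def)

lemma prec_trans: "prec \<omega> f e \<Longrightarrow> prec \<omega> e g \<Longrightarrow> prec \<omega> f g"
  by (auto simp: prec_def)

lemma prec_le: "prec \<omega> f e \<Longrightarrow> \<omega> f \<le> \<omega> e"
  by (auto simp: prec_def)

lemma finite_Pairs: "finite (Pairs N)"
  by (rule finite_subset[of _ "{..<N} \<times> {..<N}"]) (auto simp: Pairs_def)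

lemma finite_Pairs_on: "finite S \<Longrightarrow> finite (Pairs_on S)"
  by (rule finite_subset[of _ "S \<times> S"]) (auto simp: Pairs_on_def)

lemma Pairs_on_subset: "S \<subseteq> {..<N} \<Longrightarrow> Pairs_on S \<subseteq> Pairs N"
  by (auto simp: Pairs_on_def Pairs_def)

lemma mem_Pairs_on_iff: "S \<subseteq> {..<N} \<Longrightarrow> e \<in> Pairs N \<Longrightarrow> e \<in> Pairs_on S \<longleftrightarrow> fst e \<in> S \<and> snd e \<in> S"
  by (cases e) (auto simp: Pairs_on_def Pairs_def)

definition rank :: "nat \<Rightarrow> (nat \<times> nat \<Rightarrow> real) \<Rightarrow> nat \<times> nat \<Rightarrow> nat" where
  "rank N \<omega> e = card {f \<in> Pairs N. prec \<omega> f e}"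

lemma rank_less: "prec \<omega> f e \<Longrightarrow> f \<in> Pairs N \<Longrightarrow> rank N \<omega> f < rank N \<omega> e"
proof -
  assume "prec \<omega> f e" "f \<in> Pairs N"
  then have "{g \<in> Pairs N. prec \<omega> g f} \<subset> {g \<in> Pairs N. prec \<omega> g e}"
    using prec_trans prec_irrefl by blast
  then show ?thesis unfolding rank_def using finite_Pairs by (simp add: psubset_card_mono)
qed

lemma rank_less_card: "e \<in> Pairs N \<Longrightarrow> rank N \<omega> e < card (Pairs N)"
  unfolding rank_def using finite_Pairs prec_irrefl by (intro psubset_card_mono) blast+

lemma prec_induct [consumes 1, case_names less]:
  assumes "e \<in> Pairs N"
    and "\<And>e. e \<in> Pairs N \<Longrightarrow> (\<And>f. f \<in> Pairs N \<Longrightarrow> prec \<omega> f e \<Longrightarrow> P f) \<Longrightarrow> P e"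
  shows "P e"
  using assms(1)
proof (induction "rank N \<omega> e" arbitrary: e rule: less_induct)
  case less
  then show ?case using assms(2) rank_less by blast
qed

definition creatable :: "real \<Rightarrow> (nat \<times> nat \<Rightarrow> real) \<Rightarrow> (nat \<times> nat) set \<Rightarrow> nat \<times> nat \<Rightarrow> bool" where
  "creatable a \<omega> A e \<longleftrightarrow> (\<forall>v\<in>{fst e, snd e}. real (card (cluster {f\<in>A. prec \<omega> f e} v)) < a)"

definition creation_set :: "nat \<Rightarrow> real \<Rightarrow> (nat \<times> nat \<Rightarrow> real) \<Rightarrow> (nat \<times> nat) set \<Rightarrow> bool" where
  "creation_set N a \<omega> A \<longleftrightarrow> A \<subseteq> Pairs N \<and> (\<forall>e\<in>Pairs N. e \<in> A \<longleftrightarrow> creatable a \<omega> A e)"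

lemma creatable_cong:
  "{f\<in>A. prec \<omega> f e} = {f\<in>B. prec \<omega>' f e} \<Longrightarrow> creatable a \<omega> A e = creatable a \<omega>' B e"
  by (simp add: creatable_def)

lemma creation_set_unique:
  assumes A: "creation_set N a \<omega> A" and B: "creation_set N a \<omega> B"
  shows "A = B"
proof -
  have "e \<in> A \<longleftrightarrow> e \<in> B" if "e \<in> Pairs N" for e
    using that
  proof (induction rule: prec_induct[where \<omega> = \<omega>])
    case (less e)
    have "{f\<in>A. prec \<omega> f e} = {f\<in>B. prec \<omega> f e}"
      using less.IH A B by (auto simp: creation_set_def)
    then have "creatable a \<omega> A e = creatable a \<omega> B e" by (rule creatable_cong)
    then show ?case using A B less.hyps by (simp add: creation_set_def)
  qed
  then show ?thesis using A B by (auto simp: creation_set_def)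
qed

text \<open>Existence: decide the pairs one by one, in the order in which their clocks ring.\<close>

lemma creation_set_below_rank:
  "\<exists>A\<subseteq>Pairs N. (\<forall>e\<in>A. rank N \<omega> e < n) \<and>
     (\<forall>e\<in>Pairs N. rank N \<omega> e < n \<longrightarrow> (e \<in> A \<longleftrightarrow> creatable a \<omega> A e))"
proof (induction n)
  case (Suc n)
  then obtain A where A: "A \<subseteq> Pairs N" "\<forall>e\<in>A. rank N \<omega> e < n"
    "\<forall>e\<in>Pairs N. rank N \<omega> e < n \<longrightarrow> (e \<in> A \<longleftrightarrow> creatable a \<omega> A e)" by blast
  define A' where "A' = A \<union> {e\<in>Pairs N. rank N \<omega> e = n \<and> creatable a \<omega> A e}"
  have c: "creatable a \<omega> A' e = creatable a \<omega> A e" if "rank N \<omega> e < Suc n" for e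
  proof (rule creatable_cong)
    have "rank N \<omega> f < n" if "f \<in> Pairs N" "prec \<omega> f e" for f
      using rank_less[OF that(2,1)] \<open>rank N \<omega> e < Suc n\<close> by simp
    then show "{f\<in>A'. prec \<omega> f e} = {f\<in>A. prec \<omega> f e}" unfolding A'_def by blast
  qed
  have "e \<in> A' \<longleftrightarrow> creatable a \<omega> A' e" if e: "e \<in> Pairs N" "rank N \<omega> e < Suc n" for e
  proof (cases "rank N \<omega> e < n")
    case True
    then have "e \<in> A' \<longleftrightarrow> e \<in> A" unfolding A'_def by auto
    then show ?thesis using A(3) e True c[OF e(2)] by blast
  next
    case False
    then have "e \<notin> A" "rank N \<omega> e = n" using A(2) e(2) by auto
    then have "e \<in> A' \<longleftrightarrow> creatable a \<omega> A e" using e(1) unfolding A'_def by blast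
    then show ?thesis using c[OF e(2)] by blast
  qed
  moreover have "A' \<subseteq> Pairs N" "\<forall>e\<in>A'. rank N \<omega> e < Suc n" using A unfolding A'_def by auto
  ultimately show ?case by blast
qed blast

lemma creation_set_created: "creation_set N a \<omega> (created N a \<omega>)"
proof -
  obtain A where "A \<subseteq> Pairs N"
    and "\<forall>e\<in>Pairs N. rank N \<omega> e < card (Pairs N) \<longrightarrow> (e \<in> A \<longleftrightarrow> creatable a \<omega> A e)"
    using creation_set_below_rank[of N \<omega> "card (Pairs N)" a] by auto
  then have cA: "creation_set N a \<omega> A"
    using rank_less_card unfolding creation_set_def by simp
  then have "creation_set N a \<omega> (THE A. creation_set N a \<omega> A)"
    by (rule theI) (use cA creation_set_unique in blast)
  then show ?thesis unfolding created_def creation_set_def creatable_def .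
qed

lemma created_subset: "created N a \<omega> \<subseteq> Pairs N"
  using creation_set_created by (simp add: creation_set_def)

lemma created_iff: "e \<in> Pairs N \<Longrightarrow> e \<in> created N a \<omega> \<longleftrightarrow> creatable a \<omega> (created N a \<omega>) e"
  using creation_set_created by (simp add: creation_set_def)

lemma created_cong:
  assumes "\<And>e f. e \<in> Pairs N \<Longrightarrow> f \<in> Pairs N \<Longrightarrow> prec \<omega> f e = prec \<omega>' f e"
  shows "created N a \<omega> = created N a \<omega>'"
proof -
  have "creation_set N a \<omega>' (created N a \<omega>)"
    unfolding creation_set_def
  proof (intro conjI ballI created_subset)
    fix e assume e: "e \<in> Pairs N"
    have "{f\<in>created N a \<omega>. prec \<omega> f e} = {f\<in>created N a \<omega>. prec \<omega>' f e}"
      using assms e created_subset by blast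
    then show "e \<in> created N a \<omega> \<longleftrightarrow> creatable a \<omega>' (created N a \<omega>) e"
      using created_iff[OF e] creatable_cong by metis
  qed
  then show ?thesis using creation_set_created creation_set_unique by metis
qed

lemma links_subset: "links N a \<omega> t \<subseteq> Pairs N"
  using created_subset by (auto simp: links_def)

lemma finite_links: "finite (links N a \<omega> t)"
  using links_subset finite_Pairs by (rule finite_subset)

lemma Ssol_subset: "Ssol N a \<omega> t \<subseteq> {..<N}"
  by (auto simp: Ssol_def)

lemma links_no_crossing: "no_crossing (Ssol N a \<omega> t) (links N a \<omega> t)"
  unfolding no_crossing_def
proof
  fix e assume e: "e \<in> links N a \<omega> t"
  then have "fst e < N" "snd e < N" using links_subset[of N a \<omega> t] by (auto simp: Pairs_def)
  moreover have "cluster (links N a \<omega> t) (fst e) = cluster (links N a \<omega> t) (snd e)"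
    using e cluster_edge[of "fst e" "snd e"] by simp
  ultimately show "fst e \<in> Ssol N a \<omega> t \<longleftrightarrow> snd e \<in> Ssol N a \<omega> t"
    by (simp add: Ssol_def)
qed

lemma card_cluster_Ssol:
  assumes "v \<in> Ssol N a \<omega> t" "E \<subseteq> links N a \<omega> t"
  shows "real (card (cluster E v)) < a"
proof -
  have "card (cluster E v) \<le> card (cluster (links N a \<omega> t) v)"
    using assms(2) finite_links by (rule card_cluster_mono)
  then have "real (card (cluster E v)) \<le> real (card (cluster (links N a \<omega> t) v))"
    by simp
  moreover have "real (card (cluster (links N a \<omega> t) v)) < a"
    using assms(1) by (simp add: Ssol_def)
  ultimately show ?thesis by linarith
qed

definition rang_within :: "nat set \<Rightarrow> (nat \<times> nat \<Rightarrow> real) \<Rightarrow> real \<Rightarrow> (nat \<times> nat) set" where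
  "rang_within S \<omega> t = {e\<in>Pairs_on S. \<omega> e \<le> t}"

lemma rang_within_subset: "rang_within S \<omega> t \<subseteq> Pairs_on S"
  by (auto simp: rang_within_def)

lemma Csol_eq_rang_within: "Csol N a \<omega> t = rang_within (Ssol N a \<omega> t) \<omega> t"
  by (simp add: Csol_def rang_within_def)

lemma rang_within_Ssol_subset_links: "rang_within (Ssol N a \<omega> t) \<omega> t \<subseteq> links N a \<omega> t"
proof
  fix e assume e: "e \<in> rang_within (Ssol N a \<omega> t) \<omega> t"
  have eP: "e \<in> Pairs N"
    using e Pairs_on_subset[OF Ssol_subset[of N a \<omega> t]] by (auto simp: rang_within_def)
  have et: "\<omega> e \<le> t" and ends: "fst e \<in> Ssol N a \<omega> t" "snd e \<in> Ssol N a \<omega> t"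
    using e by (auto simp: rang_within_def Pairs_on_def)
  have "{f\<in>created N a \<omega>. prec \<omega> f e} \<subseteq> links N a \<omega> t"
    using et prec_le unfolding links_def by fastforce
  then have "creatable a \<omega> (created N a \<omega>) e"
    using ends card_cluster_Ssol unfolding creatable_def by blast
  then show "e \<in> links N a \<omega> t"
    using e created_iff[OF eP] by (simp add: links_def rang_within_def)
qed

lemma no_big_Csol: "no_big a (Ssol N a \<omega> t) (Csol N a \<omega> t)"
  unfolding no_big_def Csol_eq_rang_within
  using card_cluster_Ssol rang_within_Ssol_subset_links by blast

section \<open>Resampling the clocks inside \<open>S(t)\<close>\<close>

locale resampled_clocks =
  fixes N :: nat and a :: real and \<omega> \<omega>' :: "nat \<times> nat \<Rightarrow> real" and t :: real and S :: "nat set"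
  assumes Ssol_eq: "Ssol N a \<omega> t = S"
    and agree_outside: "\<And>e. e \<in> Pairs N \<Longrightarrow> e \<notin> Pairs_on S \<Longrightarrow> \<omega>' e = \<omega> e"
    and no_big_inside: "no_big a S (rang_within S \<omega>' t)"
begin

lemma S_subset: "S \<subseteq> {..<N}"
  using Ssol_eq Ssol_subset by blast

lemma links_no_crossing_S: "no_crossing S (links N a \<omega> t)"
  using links_no_crossing Ssol_eq by metis

lemma prec_resampled_outside:
  "f \<in> Pairs N \<Longrightarrow> f \<notin> Pairs_on S \<Longrightarrow> e \<in> Pairs N \<Longrightarrow> e \<notin> Pairs_on S \<Longrightarrow> prec \<omega>' f e = prec \<omega> f e"
  by (simp add: prec_def agree_outside)

text \<open>The links created under \<open>\<omega>'\<close> up to time \<open>t\<close>: every ringing pair inside \<open>S\<close>, and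
  outside \<open>S\<close> the same links as under \<open>\<omega>\<close>.\<close>

definition expected_link :: "nat \<times> nat \<Rightarrow> bool" where
  "expected_link e \<longleftrightarrow> (fst e \<in> S \<and> snd e \<in> S) \<or> (fst e \<notin> S \<and> snd e \<notin> S \<and> e \<in> created N a \<omega>)"

context
  fixes e :: "nat \<times> nat"
  assumes e: "e \<in> Pairs N" "\<omega>' e \<le> t"
    and earlier: "\<And>f. f \<in> Pairs N \<Longrightarrow> prec \<omega>' f e \<Longrightarrow> f \<in> created N a \<omega>' \<longleftrightarrow> expected_link f"
begin

lemma earlier_created_resampled:
  "{f\<in>created N a \<omega>'. prec \<omega>' f e} = {f\<in>Pairs N. prec \<omega>' f e \<and> expected_link f}"
  using earlier created_subset by blast

lemma earlier_no_crossing: "no_crossing S {f\<in>created N a \<omega>'. prec \<omega>' f e}"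
  unfolding earlier_created_resampled by (auto simp: no_crossing_def expected_link_def)

lemma creatable_inside:
  assumes inside: "fst e \<in> S" "snd e \<in> S"
  shows "creatable a \<omega>' (created N a \<omega>') e"
  unfolding creatable_def
proof
  fix v assume "v \<in> {fst e, snd e}"
  then have v: "v \<in> S" using inside by auto
  let ?D' = "{f\<in>created N a \<omega>'. prec \<omega>' f e}"
  let ?E = "{f\<in>?D'. fst f \<in> S \<and> snd f \<in> S}"
  have "cluster ?D' v = cluster ?E v"
    using earlier_no_crossing v
    by (intro cluster_eq_if_same_side[of S]) (auto simp: no_crossing_def)
  moreover have "?E \<subseteq> rang_within S \<omega>' t"
  proof
    fix f assume f: "f \<in> ?E"
    then have "f \<in> Pairs N" "\<omega>' f \<le> t"
      using created_subset prec_le[of \<omega>' f e] e(2) by auto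
    then show "f \<in> rang_within S \<omega>' t"
      using f mem_Pairs_on_iff[OF S_subset] by (simp add: rang_within_def)
  qed
  then have "card (cluster ?E v) \<le> card (cluster (rang_within S \<omega>' t) v)"
    by (rule card_cluster_mono) (simp add: rang_within_def finite_Pairs_on finite_subset[OF S_subset])
  moreover have "real (card (cluster (rang_within S \<omega>' t) v)) < a"
    using no_big_inside v by (simp add: no_big_def)
  ultimately show "real (card (cluster ?D' v)) < a" by simp
qed

context
  assumes not_inside: "\<not> (fst e \<in> S \<and> snd e \<in> S)"
begin

lemma e_outside: "e \<notin> Pairs_on S"
  using not_inside by (auto simp: Pairs_on_def)

lemma earlier_links: "{f\<in>created N a \<omega>. prec \<omega> f e} \<subseteq> links N a \<omega> t"
  using e prec_le agree_outside[OF e(1) e_outside] by (fastforce simp: links_def)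

lemma cluster_earlier_outside:
  assumes v: "v \<notin> S"
  shows "cluster {f\<in>created N a \<omega>'. prec \<omega>' f e} v = cluster {f\<in>created N a \<omega>. prec \<omega> f e} v"
proof (rule cluster_eq_if_same_side[OF earlier_no_crossing])
  let ?D' = "{f\<in>created N a \<omega>'. prec \<omega>' f e}" and ?D = "{f\<in>created N a \<omega>. prec \<omega> f e}"
  show nc: "no_crossing S ?D"
    using links_no_crossing_S earlier_links unfolding no_crossing_def by blast
  have "f \<in> ?D' \<longleftrightarrow> f \<in> ?D" if f: "fst f \<notin> S" for f
  proof -
    have out: "f \<notin> Pairs_on S" using f by (cases f) (simp add: Pairs_on_def)
    show ?thesis
    proof
      assume "f \<in> ?D'"
      then have fP: "f \<in> Pairs N" "prec \<omega>' f e" "expected_link f"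
        unfolding earlier_created_resampled by simp_all
      then have "f \<in> created N a \<omega>" using f by (simp add: expected_link_def)
      moreover have "prec \<omega> f e"
        using fP(2) prec_resampled_outside[OF fP(1) out e(1) e_outside] by simp
      ultimately show "f \<in> ?D" by simp
    next
      assume fD: "f \<in> ?D"
      then have fP: "f \<in> Pairs N" using created_subset by blast
      have "snd f \<notin> S" using fD f nc unfolding no_crossing_def by blast
      then have "expected_link f" using f fD by (simp add: expected_link_def)
      moreover have "prec \<omega>' f e"
        using fD prec_resampled_outside[OF fP out e(1) e_outside] by simp
      ultimately show "f \<in> ?D'" unfolding earlier_created_resampled using fP by simp
    qed
  qed
  then show "{f\<in>?D'. fst f \<in> S \<longleftrightarrow> v \<in> S} = {f\<in>?D. fst f \<in> S \<longleftrightarrow> v \<in> S}"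
    using v by auto
qed

lemma creatable_outside:
  assumes outside: "fst e \<notin> S" "snd e \<notin> S"
  shows "creatable a \<omega>' (created N a \<omega>') e \<longleftrightarrow> creatable a \<omega> (created N a \<omega>) e"
  using cluster_earlier_outside outside by (simp add: creatable_def)

text \<open>A pair crossing \<open>S(t)\<close> was refused under \<open>\<omega>\<close> because of a big cluster on the outer side,
  and that cluster is still there under \<open>\<omega>'\<close>.\<close>

lemma not_creatable_crossing:
  assumes crossing: "fst e \<in> S \<or> snd e \<in> S"
  shows "\<not> creatable a \<omega>' (created N a \<omega>') e"
proof -
  have "e \<notin> links N a \<omega> t"
    using links_no_crossing_S crossing not_inside by (auto simp: no_crossing_def)
  then have "\<not> creatable a \<omega> (created N a \<omega>) e"
    using created_iff[OF e(1)] e(2) agree_outside[OF e(1) e_outside] by (simp add: links_def)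
  then obtain v where v: "v \<in> {fst e, snd e}"
    and big: "\<not> real (card (cluster {f\<in>created N a \<omega>. prec \<omega> f e} v)) < a"
    unfolding creatable_def by blast
  have "v \<notin> S"
    using card_cluster_Ssol[OF _ earlier_links] big Ssol_eq by blast
  then show ?thesis
    using v big cluster_earlier_outside unfolding creatable_def by auto
qed

end

lemma created_resampled_step: "e \<in> created N a \<omega>' \<longleftrightarrow> expected_link e"
proof -
  have "e \<in> created N a \<omega>' \<longleftrightarrow> creatable a \<omega>' (created N a \<omega>') e"
    using created_iff[OF e(1)] .
  then show ?thesis
    using creatable_inside creatable_outside not_creatable_crossing created_iff[OF e(1)]
    unfolding expected_link_def by blast
qed

end

lemma created_resampled:
  assumes "e \<in> Pairs N" "\<omega>' e \<le> t"
  shows "e \<in> created N a \<omega>' \<longleftrightarrow> expected_link e"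
proof -
  have "\<omega>' e \<le> t \<longrightarrow> (e \<in> created N a \<omega>' \<longleftrightarrow> expected_link e)"
    using assms(1)
  proof (induction rule: prec_induct[where \<omega> = \<omega>'])
    case (less e)
    show ?case
      using less.hyps less.IH prec_le[of \<omega>' _ e] created_resampled_step[of e]
      by (meson order_trans)
  qed
  then show ?thesis using assms(2) by blast
qed

lemma links_resampled:
  "links N a \<omega>' t = rang_within S \<omega>' t \<union> {f\<in>links N a \<omega> t. fst f \<notin> S \<and> snd f \<notin> S}"
proof (intro set_eqI)
  fix f
  show "f \<in> links N a \<omega>' t \<longleftrightarrow> f \<in> rang_within S \<omega>' t \<union> {f\<in>links N a \<omega> t. fst f \<notin> S \<and> snd f \<notin> S}"
  proof (cases "f \<in> Pairs N")
    case True
    show ?thesis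
    proof (cases "fst f \<in> S \<and> snd f \<in> S")
      case inside: True
      then show ?thesis
        using created_resampled[OF True] mem_Pairs_on_iff[OF S_subset True]
        by (auto simp: links_def rang_within_def expected_link_def)
    next
      case False
      then have "f \<notin> Pairs_on S" by (auto simp: Pairs_on_def)
      then show ?thesis
        using created_resampled[OF True] False agree_outside[OF True]
        by (auto simp: links_def rang_within_def expected_link_def)
    qed
  next
    case False
    then have "f \<notin> links N a \<omega>' t" "f \<notin> links N a \<omega> t" "f \<notin> Pairs_on S"
      using links_subset[of N a \<omega>' t] links_subset[of N a \<omega> t] Pairs_on_subset[OF S_subset]
      by blast+
    then show ?thesis by (simp add: rang_within_def)
  qed
qed

lemma Ssol_resampled: "Ssol N a \<omega>' t = S"
proof -
  let ?L = "links N a \<omega> t" and ?L' = "links N a \<omega>' t" and ?R = "rang_within S \<omega>' t"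
  have inside: "fst f \<in> S" "snd f \<in> S" if "f \<in> ?R" for f
    using that by (auto simp: rang_within_def Pairs_on_def)
  have ncR: "no_crossing S ?R"
    using inside unfolding no_crossing_def by blast
  have ncL': "no_crossing S ?L'"
    using links_no_crossing_S inside unfolding links_resampled no_crossing_def by blast
  have "cluster ?L' v = cluster ?L v" if "v \<notin> S" for v
  proof (rule cluster_eq_if_same_side[OF ncL' links_no_crossing_S])
    show "{f\<in>?L'. fst f \<in> S \<longleftrightarrow> v \<in> S} = {f\<in>?L. fst f \<in> S \<longleftrightarrow> v \<in> S}"
      using that inside links_no_crossing_S unfolding links_resampled no_crossing_def by blast
  qed
  moreover have "cluster ?L' v = cluster ?R v" if "v \<in> S" for v
  proof (rule cluster_eq_if_same_side[OF ncL' ncR])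
    show "{f\<in>?L'. fst f \<in> S \<longleftrightarrow> v \<in> S} = {f\<in>?R. fst f \<in> S \<longleftrightarrow> v \<in> S}"
      using that inside unfolding links_resampled by blast
  qed
  ultimately show ?thesis
    using Ssol_eq no_big_inside S_subset unfolding Ssol_def no_big_def by auto
qed

end

section \<open>The probability space of the clocks\<close>

definition clock_law :: "nat \<Rightarrow> real measure" where
  "clock_law N = density lborel (exponential_density (1 / real N))"

lemma clock_space_eq: "clock_space N = PiM (Pairs N) (\<lambda>_. clock_law N)"
  by (simp add: clock_space_def clock_law_def)

lemma sets_clock_law [simp, measurable_cong]: "sets (clock_law N) = sets borel"
  by (simp add: clock_law_def)

lemma prob_space_clock_law: "0 < N \<Longrightarrow> prob_space (clock_law N)"
  unfolding clock_law_def by (rule prob_space_exponential_density) simp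

lemma finite_product_prob_space_clock:
  "0 < N \<Longrightarrow> finite_product_prob_space (\<lambda>_. clock_law N) (Pairs N)"
  using prob_space_clock_law[of N] finite_Pairs[of N]
  by (simp add: finite_product_prob_space_def finite_product_sigma_finite_def
      product_prob_space_def product_prob_space_axioms_def product_sigma_finite_def
      finite_product_sigma_finite_axioms_def prob_space_imp_sigma_finite)

lemma prob_space_clock_space: "0 < N \<Longrightarrow> prob_space (clock_space N)"
  unfolding clock_space_eq by (rule prob_space_PiM) (rule prob_space_clock_law)

lemma space_clock_space: "space (clock_space N) = PiE (Pairs N) (\<lambda>_. UNIV)"
  by (simp add: clock_space_eq space_PiM clock_law_def)

lemma measurable_clock: "(\<lambda>\<omega>. \<omega> e) \<in> borel_measurable (clock_space N)"
proof (cases "e \<in> Pairs N")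
  case True
  have eq: "borel_measurable (clock_space N) = clock_space N \<rightarrow>\<^sub>M clock_law N"
    by (rule measurable_cong_sets) simp_all
  show ?thesis
    unfolding eq unfolding clock_space_eq by (rule measurable_component_singleton[OF True])
next
  case False
  have undef: "\<omega> e = undefined" if "\<omega> \<in> space (clock_space N)" for \<omega>
    using that False PiE_arb[of \<omega> "Pairs N" "\<lambda>_. UNIV" e] unfolding space_clock_space by blast
  show ?thesis
    by (subst measurable_cong[where g = "\<lambda>_. undefined"]) (use undef in auto)
qed

lemma measure_clock_law_atMost:
  assumes "0 < N" "0 \<le> t"
  shows "measure (clock_law N) {..t} = pN N t"
proof -
  interpret prob_space "clock_law N" by (rule prob_space_clock_law[OF assms(1)])
  have "distributed (clock_law N) lborel (\<lambda>x. x) (exponential_density (1 / real N))"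
    unfolding distributed_def by (auto simp: clock_law_def distr_id2)
  from exponential_distributedD_le[OF this assms(2)] assms(1)
  show ?thesis by (simp add: pN_def clock_law_def atMost_def)
qed

lemma measure_clock_law_greaterThan:
  assumes "0 < N" "0 \<le> t"
  shows "measure (clock_law N) {t<..} = 1 - pN N t"
proof -
  interpret prob_space "clock_law N" by (rule prob_space_clock_law[OF assms(1)])
  have "{t<..} = space (clock_law N) - {..t}" by (auto simp: clock_law_def)
  then show ?thesis
    using prob_compl[of "{..t}"] measure_clock_law_atMost[OF assms] by simp
qed

section \<open>Measurability through the ring pattern\<close>

text \<open>Everything observed at time \<open>t\<close> is determined by the finite data of which clocks have rung
  and in which order: the \<^emph>\<open>ring pattern\<close>.\<close>

definition ring_pattern ::
  "nat \<Rightarrow> real \<Rightarrow> (nat \<times> nat \<Rightarrow> real) \<Rightarrow> (nat \<times> nat) set \<times> ((nat \<times> nat) \<times> (nat \<times> nat)) set" where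
  "ring_pattern N t \<omega> = ({e\<in>Pairs N. \<omega> e \<le> t}, {(e, f). e \<in> Pairs N \<and> f \<in> Pairs N \<and> prec \<omega> f e})"

lemma ring_pattern_eqD:
  assumes "ring_pattern N t \<omega> = ring_pattern N t' \<omega>'"
  shows "\<And>e f. e \<in> Pairs N \<Longrightarrow> f \<in> Pairs N \<Longrightarrow> prec \<omega> f e = prec \<omega>' f e"
    and "\<And>e. e \<in> Pairs N \<Longrightarrow> \<omega> e \<le> t \<longleftrightarrow> \<omega>' e \<le> t'"
proof -
  fix e f assume "e \<in> Pairs N" "f \<in> Pairs N"
  moreover have "(e, f) \<in> snd (ring_pattern N t \<omega>) \<longleftrightarrow> (e, f) \<in> snd (ring_pattern N t' \<omega>')"
    using assms by simp
  ultimately show "prec \<omega> f e = prec \<omega>' f e" by (simp add: ring_pattern_def)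
next
  fix e assume "e \<in> Pairs N"
  moreover have "e \<in> fst (ring_pattern N t \<omega>) \<longleftrightarrow> e \<in> fst (ring_pattern N t' \<omega>')"
    using assms by simp
  ultimately show "\<omega> e \<le> t \<longleftrightarrow> \<omega>' e \<le> t'" by (simp add: ring_pattern_def)
qed

lemma sol_eq_if_ring_pattern_eq:
  assumes "ring_pattern N t \<omega> = ring_pattern N t' \<omega>'"
  shows "Ssol N a \<omega> t = Ssol N a \<omega>' t'" "Csol N a \<omega> t = Csol N a \<omega>' t'"
proof -
  have "created N a \<omega> = created N a \<omega>'"
    using ring_pattern_eqD(1)[OF assms] by (rule created_cong)
  then have "links N a \<omega> t = links N a \<omega>' t'"
    using created_subset[of N a \<omega>'] ring_pattern_eqD(2)[OF assms] by (auto simp: links_def)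
  then show S: "Ssol N a \<omega> t = Ssol N a \<omega>' t'" by (simp add: Ssol_def)
  have "Pairs_on (Ssol N a \<omega> t) \<subseteq> Pairs N" by (rule Pairs_on_subset[OF Ssol_subset])
  then show "Csol N a \<omega> t = Csol N a \<omega>' t'"
    unfolding Csol_def S[symmetric] using ring_pattern_eqD(2)[OF assms] by auto
qed

lemma ring_pattern_right_constant:
  "\<exists>\<delta>>0. \<forall>s. r \<le> s \<and> s < r + \<delta> \<longrightarrow> ring_pattern N s \<omega> = ring_pattern N r \<omega>"
proof -
  define D where "D = (\<lambda>e. \<omega> e - r) ` {e\<in>Pairs N. r < \<omega> e}"
  have finD: "finite D" unfolding D_def using finite_Pairs by simp
  define \<delta> where "\<delta> = (if D = {} then 1 else Min D)"
  have "\<delta> > 0" using finD by (auto simp: \<delta>_def D_def)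
  moreover have "\<delta> \<le> \<omega> e - r" if "e \<in> Pairs N" "r < \<omega> e" for e
  proof -
    have "\<omega> e - r \<in> D" using that by (auto simp: D_def)
    then show ?thesis using finD by (auto simp: \<delta>_def)
  qed
  then have "ring_pattern N s \<omega> = ring_pattern N r \<omega>" if "r \<le> s" "s < r + \<delta>" for s
    using that by (force simp: ring_pattern_def)
  ultimately show ?thesis by blast
qed

lemma measurable_ring_pattern:
  assumes [measurable]: "\<theta> \<in> borel_measurable M" "\<And>e. (\<lambda>x. g x e) \<in> borel_measurable M"
  shows "(\<lambda>x. ring_pattern N (\<theta> x) (g x)) \<in> M \<rightarrow>\<^sub>M count_space (Pow (Pairs N) \<times> Pow (Pairs N \<times> Pairs N))"
proof -
  have level: "(\<lambda>x. ring_pattern N (\<theta> x) (g x)) -` {(A, B)} \<inter> space M \<in> sets M"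
    if A: "A \<subseteq> Pairs N" and B: "B \<subseteq> Pairs N \<times> Pairs N" for A B
  proof -
    have "ring_pattern N (\<theta> x) (g x) = (A, B) \<longleftrightarrow>
      (\<forall>e\<in>Pairs N. g x e \<le> \<theta> x \<longleftrightarrow> e \<in> A) \<and>
      (\<forall>e\<in>Pairs N. \<forall>f\<in>Pairs N. prec (g x) f e \<longleftrightarrow> (e, f) \<in> B)" for x
      unfolding ring_pattern_def prod.inject using A B by blast
    then have "(\<lambda>x. ring_pattern N (\<theta> x) (g x)) -` {(A, B)} \<inter> space M =
      {x\<in>space M. (\<forall>e\<in>Pairs N. g x e \<le> \<theta> x \<longleftrightarrow> e \<in> A) \<and>
         (\<forall>e\<in>Pairs N. \<forall>f\<in>Pairs N. prec (g x) f e \<longleftrightarrow> (e, f) \<in> B)}"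
      by blast
    also have "\<dots> \<in> sets M"
      unfolding prec_def using finite_Pairs by measurable
    finally show ?thesis .
  qed
  have fin: "finite (Pow (Pairs N) \<times> Pow (Pairs N \<times> Pairs N))" using finite_Pairs by simp
  show ?thesis
    unfolding measurable_count_space_eq2[OF fin]
  proof (intro conjI ballI)
    show "(\<lambda>x. ring_pattern N (\<theta> x) (g x)) \<in> space M \<rightarrow> Pow (Pairs N) \<times> Pow (Pairs N \<times> Pairs N)"
      by (auto simp: ring_pattern_def)
    fix d assume "d \<in> Pow (Pairs N) \<times> Pow (Pairs N \<times> Pairs N)"
    then show "(\<lambda>x. ring_pattern N (\<theta> x) (g x)) -` {d} \<inter> space M \<in> sets M"
      using level by (cases d) simp
  qed
qed

lemma pred_ring_pattern_invariant:
  assumes "\<theta> \<in> borel_measurable M" "\<And>e. (\<lambda>x. g x e) \<in> borel_measurable M"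
    and invariant: "\<And>t \<omega> t' \<omega>'. ring_pattern N t \<omega> = ring_pattern N t' \<omega>' \<Longrightarrow> P t \<omega> = P t' \<omega>'"
  shows "Measurable.pred M (\<lambda>x. P (\<theta> x) (g x))"
proof -
  define Q where "Q d \<longleftrightarrow> (\<exists>t \<omega>. ring_pattern N t \<omega> = d \<and> P t \<omega>)" for d
  have "P (\<theta> x) (g x) = Q (ring_pattern N (\<theta> x) (g x))" for x
    using invariant unfolding Q_def by blast
  moreover have "Measurable.pred M (\<lambda>x. Q (ring_pattern N (\<theta> x) (g x)))"
    using measurable_ring_pattern[OF assms(1,2)] by (rule measurable_compose) simp
  ultimately show ?thesis by simp
qed

lemma pred_sol:
  assumes "\<theta> \<in> borel_measurable M" "\<And>e. (\<lambda>x. g x e) \<in> borel_measurable M"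
  shows "Measurable.pred M (\<lambda>x. Q (Ssol N a (g x) (\<theta> x)) (Csol N a (g x) (\<theta> x)))"
proof (rule pred_ring_pattern_invariant[where P = "\<lambda>t \<omega>. Q (Ssol N a \<omega> t) (Csol N a \<omega> t)"])
  fix t \<omega> t' \<omega>' assume "ring_pattern N t \<omega> = ring_pattern N t' \<omega>'"
  from sol_eq_if_ring_pattern_eq[OF this]
  show "Q (Ssol N a \<omega> t) (Csol N a \<omega> t) = Q (Ssol N a \<omega>' t') (Csol N a \<omega>' t')" by simp
qed (use assms in simp_all)

lemma pred_sol_clock:
  "\<theta> \<in> borel_measurable (clock_space N) \<Longrightarrow>
    Measurable.pred (clock_space N) (\<lambda>\<omega>. Q (Ssol N a \<omega> (\<theta> \<omega>)) (Csol N a \<omega> (\<theta> \<omega>)))"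
  using pred_sol[where g = "\<lambda>\<omega>. \<omega>", OF _ measurable_clock] .

lemma sets_Ssol_Csol:
  "{\<omega>\<in>space (clock_space N). Q (Ssol N a \<omega> t) (Csol N a \<omega> t)} \<in> sets (clock_space N)"
proof -
  have "Measurable.pred (clock_space N) (\<lambda>\<omega>. Q (Ssol N a \<omega> t) (Csol N a \<omega> t))"
    by (rule pred_sol_clock[where \<theta> = "\<lambda>_. t", OF borel_measurable_const])
  then show ?thesis by (simp only: pred_def)
qed

section \<open>The law of the configuration in solution at a fixed time\<close>

definition reset_within :: "nat set \<Rightarrow> real \<Rightarrow> (nat \<times> nat \<Rightarrow> real) \<Rightarrow> nat \<times> nat \<Rightarrow> real" where
  "reset_within S c \<omega> = (\<lambda>e. if e \<in> Pairs_on S then c else \<omega> e)"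

lemma measurable_reset_within [measurable]:
  "(\<lambda>\<omega>. reset_within S c \<omega> e) \<in> borel_measurable (clock_space N)"
  by (cases "e \<in> Pairs_on S") (simp_all add: reset_within_def measurable_clock)

lemma rang_within_reset_within: "t < c \<Longrightarrow> rang_within S (reset_within S c \<omega>) t = {}"
  by (auto simp: rang_within_def reset_within_def)

lemma no_big_empty_Ssol: "no_big a (Ssol N a \<omega> t) {}"
  unfolding no_big_def using card_cluster_Ssol[of _ N a \<omega> t "{}"] by blast

text \<open>The two conditions on the right depend on disjoint sets of clocks: this decoupling is what
  produces the Erdos-Renyi law inside \<open>S\<close>.\<close>

lemma Ssol_eq_iff_reset_within:
  "Ssol N a \<omega> t = S \<longleftrightarrow>
     no_big a S (rang_within S \<omega> t) \<and> Ssol N a (reset_within S (t + 1) \<omega>) t = S"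
proof
  assume S: "Ssol N a \<omega> t = S"
  have "rang_within S (reset_within S (t + 1) \<omega>) t = {}"
    by (rule rang_within_reset_within) simp
  then interpret resampled_clocks N a \<omega> "reset_within S (t + 1) \<omega>" t S
    using S no_big_empty_Ssol[of a N \<omega> t] by unfold_locales (auto simp: reset_within_def)
  show "no_big a S (rang_within S \<omega> t) \<and> Ssol N a (reset_within S (t + 1) \<omega>) t = S"
    using S no_big_Csol[of a N \<omega> t] Ssol_resampled by (simp add: Csol_eq_rang_within)
next
  assume "no_big a S (rang_within S \<omega> t) \<and> Ssol N a (reset_within S (t + 1) \<omega>) t = S"
  then interpret resampled_clocks N a "reset_within S (t + 1) \<omega>" \<omega> t S
    by unfold_locales (auto simp: reset_within_def)
  show "Ssol N a \<omega> t = S" by (rule Ssol_resampled)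
qed

lemma rang_within_event_eq_PiE:
  assumes S: "S \<subseteq> {..<N}" and H: "H \<subseteq> Pairs_on S"
  shows "{\<omega>\<in>space (clock_space N). rang_within S \<omega> t = H} =
    PiE (Pairs N) (\<lambda>e. if e \<in> H then {..t} else if e \<in> Pairs_on S then {t<..} else UNIV)"
    (is "_ = PiE _ ?X")
proof (intro set_eqI iffI)
  fix \<omega> assume "\<omega> \<in> {\<omega>\<in>space (clock_space N). rang_within S \<omega> t = H}"
  then have sp: "\<omega> \<in> PiE (Pairs N) (\<lambda>_. UNIV)" and R: "rang_within S \<omega> t = H"
    by (auto simp: space_clock_space)
  have "\<omega> e \<in> ?X e" if "e \<in> Pairs N" for e
    using R H unfolding rang_within_def by auto
  then show "\<omega> \<in> PiE (Pairs N) ?X" using sp by (auto simp: PiE_iff)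
next
  fix \<omega> assume \<omega>: "\<omega> \<in> PiE (Pairs N) ?X"
  then have "\<omega> e \<in> ?X e" if "e \<in> Pairs N" for e using that by (auto simp: PiE_iff)
  then have "rang_within S \<omega> t = H"
    using H Pairs_on_subset[OF S] unfolding rang_within_def by (force split: if_splits)
  then show "\<omega> \<in> {\<omega>\<in>space (clock_space N). rang_within S \<omega> t = H}"
    using \<omega> by (auto simp: space_clock_space PiE_iff)
qed

lemma measure_rang_within_eq:
  assumes N: "0 < N" and S: "S \<subseteq> {..<N}" and t: "0 \<le> t" and H: "H \<subseteq> Pairs_on S"
  shows "measure (clock_space N) {\<omega>\<in>space (clock_space N). rang_within S \<omega> t = H} = er_weight S (pN N t) H"
proof -
  interpret finite_product_prob_space "\<lambda>_. clock_law N" "Pairs N"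
    by (rule finite_product_prob_space_clock[OF N])
  define X where "X e = (if e \<in> H then {..t} else if e \<in> Pairs_on S then {t<..} else UNIV)" for e
  have PS: "Pairs_on S \<subseteq> Pairs N" by (rule Pairs_on_subset[OF S])
  have "{\<omega>\<in>space (clock_space N). rang_within S \<omega> t = H} = PiE (Pairs N) X"
    unfolding X_def[abs_def] by (rule rang_within_event_eq_PiE[OF S H])
  then have "measure (clock_space N) {\<omega>\<in>space (clock_space N). rang_within S \<omega> t = H} =
      (\<Prod>e\<in>Pairs N. measure (clock_law N) (X e))"
    unfolding clock_space_eq by (simp add: prob_times X_def)
  also have "\<dots> = (\<Prod>e\<in>Pairs_on S. measure (clock_law N) (X e))"
  proof (intro prod.mono_neutral_right finite_Pairs PS ballI)
    have "measure (clock_law N) UNIV = 1"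
      using prob_space.prob_space[OF prob_space_clock_law[OF N]] by (simp add: clock_law_def)
    then show "measure (clock_law N) (X e) = 1" if "e \<in> Pairs N - Pairs_on S" for e
      using that H by (auto simp: X_def)
  qed
  also have "\<dots> = (\<Prod>e\<in>H. measure (clock_law N) (X e)) * (\<Prod>e\<in>Pairs_on S - H. measure (clock_law N) (X e))"
    using H finite_subset[OF PS finite_Pairs] by (simp add: prod.subset_diff mult.commute)
  also have "(\<Prod>e\<in>H. measure (clock_law N) (X e)) = (\<Prod>e\<in>H. pN N t)"
    using measure_clock_law_atMost[OF N t] by (intro prod.cong) (auto simp: X_def)
  also have "(\<Prod>e\<in>Pairs_on S - H. measure (clock_law N) (X e)) = (\<Prod>e\<in>Pairs_on S - H. 1 - pN N t)"
    using measure_clock_law_greaterThan[OF N t] by (intro prod.cong) (auto simp: X_def)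
  also have "(\<Prod>e\<in>H. pN N t) * (\<Prod>e\<in>Pairs_on S - H. 1 - pN N t) = er_weight S (pN N t) H"
    using H finite_subset[OF PS finite_Pairs] finite_subset[OF H]
    by (simp add: er_weight_def card_Diff_subset)
  finally show ?thesis .
qed

lemma pred_rang_within:
  assumes "S \<subseteq> {..<N}"
  shows "Measurable.pred (clock_space N) (\<lambda>\<omega>. rang_within S \<omega> t = H)"
proof (rule pred_ring_pattern_invariant[where \<theta> = "\<lambda>_. t" and g = "\<lambda>\<omega>. \<omega>" and P = "\<lambda>t \<omega>. rang_within S \<omega> t = H"])
  fix t \<omega> t' \<omega>' assume "ring_pattern N t \<omega> = ring_pattern N t' \<omega>'"
  then have "\<omega> e \<le> t \<longleftrightarrow> \<omega>' e \<le> t'" if "e \<in> Pairs_on S" for e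
    using ring_pattern_eqD(2) Pairs_on_subset[OF assms] that by blast
  then have "rang_within S \<omega> t = rang_within S \<omega>' t'"
    unfolding rang_within_def by blast
  then show "(rang_within S \<omega> t = H) = (rang_within S \<omega>' t' = H)" by simp
qed (simp, rule measurable_clock)

lemma measure_rang_within_Int_reset_within:
  fixes t t' c a :: real and H :: "(nat \<times> nat) set" and S' :: "nat set"
  assumes N: "0 < N" and S: "S \<subseteq> {..<N}"
  defines "M \<equiv> clock_space N"
  defines "R \<equiv> {\<omega>\<in>space M. rang_within S \<omega> t = H}"
    and "U \<equiv> {\<omega>\<in>space M. Ssol N a (reset_within S c \<omega>) t' = S'}"
  shows "measure M (R \<inter> U) = measure M R * measure M U"
proof -
  interpret finite_product_prob_space "\<lambda>_. clock_law N" "Pairs N"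
    by (rule finite_product_prob_space_clock[OF N])
  have R: "R \<in> sets M"
    using pred_rang_within[OF S, of t H] unfolding R_def M_def pred_def .
  have U: "U \<in> sets M"
    using pred_sol[where \<theta> = "\<lambda>_. t'" and g = "reset_within S c" and Q = "\<lambda>S C. S = S'",
        OF borel_measurable_const measurable_reset_within]
    unfolding U_def M_def pred_def .
  show ?thesis
    unfolding M_def clock_space_eq
  proof (rule measure_Int_disjoint_coordinates[OF Pairs_on_subset[OF S]])
    show "R \<in> sets (PiM (Pairs N) (\<lambda>_. clock_law N))" "U \<in> sets (PiM (Pairs N) (\<lambda>_. clock_law N))"
      using R U unfolding M_def clock_space_eq by simp_all
    show "y \<in> R" if "x \<in> space (PiM (Pairs N) (\<lambda>_. clock_law N))"
      "y \<in> space (PiM (Pairs N) (\<lambda>_. clock_law N))" "\<forall>j\<in>Pairs_on S. x j = y j" "x \<in> R" for x y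
    proof -
      have "rang_within S y t = rang_within S x t"
        using that(3) unfolding rang_within_def by auto
      then show ?thesis using that(2,4) unfolding R_def M_def clock_space_eq by simp
    qed
    show "y \<in> U" if x: "x \<in> space (PiM (Pairs N) (\<lambda>_. clock_law N))"
      and y: "y \<in> space (PiM (Pairs N) (\<lambda>_. clock_law N))"
      and agree: "\<forall>j\<in>Pairs N - Pairs_on S. x j = y j" and xU: "x \<in> U" for x y
    proof -
      have "x e = y e" if "e \<notin> Pairs_on S" for e
      proof (cases "e \<in> Pairs N")
        case False
        then show ?thesis
          using PiE_arb[of x "Pairs N" _ e] PiE_arb[of y "Pairs N" _ e] x y
          unfolding space_PiM by metis
      qed (use that agree in blast)
      then have "reset_within S c x = reset_within S c y"
        unfolding reset_within_def by auto
      then show ?thesis using y xU unfolding U_def M_def clock_space_eq by simp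
    qed
  qed
qed

lemma measure_Ssol_rang_within:
  assumes N: "0 < N" and S: "S \<subseteq> {..<N}" and t: "0 \<le> t"
  defines "M \<equiv> clock_space N"
  shows "measure M {\<omega>\<in>space M. Ssol N a \<omega> t = S \<and> rang_within S \<omega> t = H} =
    (if H \<subseteq> Pairs_on S \<and> no_big a S H
     then er_weight S (pN N t) H * measure M {\<omega>\<in>space M. Ssol N a (reset_within S (t + 1) \<omega>) t = S}
     else 0)"
proof (cases "H \<subseteq> Pairs_on S \<and> no_big a S H")
  case True
  have "{\<omega>\<in>space M. Ssol N a \<omega> t = S \<and> rang_within S \<omega> t = H} =
      {\<omega>\<in>space M. rang_within S \<omega> t = H} \<inter> {\<omega>\<in>space M. Ssol N a (reset_within S (t + 1) \<omega>) t = S}"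
    using True Ssol_eq_iff_reset_within[of N a _ t S] by blast
  then show ?thesis
    using True measure_rang_within_Int_reset_within[OF N S] measure_rang_within_eq[OF N S t]
    unfolding M_def by simp
next
  case False
  then have "{\<omega>\<in>space M. Ssol N a \<omega> t = S \<and> rang_within S \<omega> t = H} = {}"
    using rang_within_subset[of S _ t] Ssol_eq_iff_reset_within[of N a _ t S] by blast
  then show ?thesis unfolding if_not_P[OF False] by (simp only: measure_empty)
qed

lemma sets_Ssol_rang_within:
  assumes "S \<subseteq> {..<N}"
  shows "{\<omega>\<in>space (clock_space N). Ssol N a \<omega> t = S' \<and> rang_within S \<omega> t = H} \<in> sets (clock_space N)"
proof -
  have "{\<omega>\<in>space (clock_space N). Ssol N a \<omega> t = S' \<and> rang_within S \<omega> t = H} =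
    {\<omega>\<in>space (clock_space N). Ssol N a \<omega> t = S'} \<inter> {\<omega>\<in>space (clock_space N). rang_within S \<omega> t = H}"
    by blast
  also have "\<dots> \<in> sets (clock_space N)"
    using sets_Ssol_Csol[where Q = "\<lambda>S C. S = S'"] pred_rang_within[OF assms, of t H]
    unfolding pred_def by blast
  finally show ?thesis .
qed

lemma measure_Ssol_eq:
  assumes N: "0 < N" and S: "S \<subseteq> {..<N}" and t: "0 \<le> t"
  defines "M \<equiv> clock_space N"
  shows "measure M {\<omega>\<in>space M. Ssol N a \<omega> t = S} =
    (\<Sum>H | H \<subseteq> Pairs_on S \<and> no_big a S H. er_weight S (pN N t) H) *
    measure M {\<omega>\<in>space M. Ssol N a (reset_within S (t + 1) \<omega>) t = S}"
proof -
  interpret prob_space M unfolding M_def by (rule prob_space_clock_space[OF N])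
  let ?w = "er_weight S (pN N t)"
    and ?U = "measure M {\<omega>\<in>space M. Ssol N a (reset_within S (t + 1) \<omega>) t = S}"
  let ?Ev = "\<lambda>H. {\<omega>\<in>space M. Ssol N a \<omega> t = S \<and> rang_within S \<omega> t = H}"
  have fin: "finite (Pow (Pairs_on S))"
    using finite_subset[OF Pairs_on_subset[OF S] finite_Pairs] by simp
  have "{\<omega>\<in>space M. Ssol N a \<omega> t = S} = (\<Union>H\<in>Pow (Pairs_on S). ?Ev H)"
    using rang_within_subset by blast
  then have "measure M {\<omega>\<in>space M. Ssol N a \<omega> t = S} = (\<Sum>H\<in>Pow (Pairs_on S). measure M (?Ev H))"
    using fin sets_Ssol_rang_within[OF S]
    by (simp only:) (rule finite_measure_finite_Union, auto simp: disjoint_family_on_def M_def)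
  also have "\<dots> = (\<Sum>H\<in>Pow (Pairs_on S). if no_big a S H then ?w H * ?U else 0)"
    using measure_Ssol_rang_within[OF N S t] unfolding M_def by (intro sum.cong) auto
  also have "\<dots> = (\<Sum>H\<in>{H\<in>Pow (Pairs_on S). no_big a S H}. ?w H * ?U)"
    by (rule sum.inter_filter[OF fin, symmetric])
  also have "{H\<in>Pow (Pairs_on S). no_big a S H} = {H. H \<subseteq> Pairs_on S \<and> no_big a S H}" by auto
  finally show ?thesis by (simp only: sum_distrib_right)
qed

theorem law_fixed_time:
  assumes N: "0 < N" and S: "S \<subseteq> {..<N}" and t: "0 \<le> t"
  defines "M \<equiv> clock_space N"
  shows "measure M {\<omega>\<in>space M. Ssol N a \<omega> t = S \<and> Csol N a \<omega> t = G} =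
    ER_cond a S (pN N t) G * measure M {\<omega>\<in>space M. Ssol N a \<omega> t = S}"
proof -
  let ?w = "er_weight S (pN N t)"
    and ?U = "measure M {\<omega>\<in>space M. Ssol N a (reset_within S (t + 1) \<omega>) t = S}"
  let ?good = "{H. H \<subseteq> Pairs_on S \<and> no_big a S H}"
  let ?Z = "\<Sum>H\<in>?good. ?w H"
  have "{\<omega>\<in>space M. Ssol N a \<omega> t = S \<and> Csol N a \<omega> t = G} =
      {\<omega>\<in>space M. Ssol N a \<omega> t = S \<and> rang_within S \<omega> t = G}"
    by (auto simp: Csol_eq_rang_within)
  then have part: "measure M {\<omega>\<in>space M. Ssol N a \<omega> t = S \<and> Csol N a \<omega> t = G} =
      (if G \<in> ?good then ?w G * ?U else 0)"
    using measure_Ssol_rang_within[OF N S t] unfolding M_def by simp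
  show ?thesis
  proof (cases "G \<in> ?good")
    case True
    have w_nonneg: "0 \<le> ?w H" for H
      using t by (simp add: er_weight_def pN_def)
    have "?w G \<le> ?Z"
      using True w_nonneg finite_Pairs_on[OF finite_subset[OF S finite_lessThan]]
      by (intro member_le_sum) (auto intro: finite_subset[of _ "Pow (Pairs_on S)"])
    then have Z0: "?Z = 0 \<Longrightarrow> ?w G = 0" using w_nonneg[of G] by linarith
    have arith: "\<And>m w Z U :: real. m = w * U \<Longrightarrow> (Z = 0 \<Longrightarrow> w = 0) \<Longrightarrow> m = w / Z * (Z * U)"
      by (case_tac "Z = 0") auto
    have ER: "ER_cond a S (pN N t) G = ?w G / ?Z"
      using True by (simp add: ER_cond_def)
    have mG: "measure M {\<omega>\<in>space M. Ssol N a \<omega> t = S \<and> Csol N a \<omega> t = G} = ?w G * ?U"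
      using True part by simp
    show ?thesis
      unfolding measure_Ssol_eq[OF N S t, folded M_def] ER by (rule arith[OF mG Z0])
  next
    case False
    then have "ER_cond a S (pN N t) G = 0" unfolding ER_cond_def by auto
    moreover have "measure M {\<omega>\<in>space M. Ssol N a \<omega> t = S \<and> Csol N a \<omega> t = G} = 0"
      using False part by auto
    ultimately show ?thesis by (simp only: mult_zero_left)
  qed
qed

section \<open>The law on the events of a gelation stopping time\<close>

definition positive_clocks :: "nat \<Rightarrow> (nat \<times> nat \<Rightarrow> real) set" where
  "positive_clocks N = {\<omega>\<in>space (clock_space N). \<forall>e\<in>Pairs N. 0 < \<omega> e}"

lemma sets_positive_clocks: "positive_clocks N \<in> sets (clock_space N)"
  unfolding positive_clocks_def using finite_Pairs measurable_clock by measurable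

lemma AE_positive_clocks:
  assumes N: "0 < N"
  shows "AE \<omega> in clock_space N. \<omega> \<in> positive_clocks N"
proof -
  have pos: "AE x in clock_law N. 0 < x"
  proof (rule AE_I')
    show "{..0} \<in> null_sets (clock_law N)"
      using measure_clock_law_atMost[OF N order_refl] prob_space_clock_law[OF N]
      by (simp add: null_sets_def pN_def prob_space_def finite_measure.emeasure_eq_measure)
  qed auto
  have "AE \<omega> in clock_space N. \<forall>e\<in>Pairs N. 0 < \<omega> e"
    using finite_Pairs
  proof (rule AE_finite_allI)
    fix e assume "e \<in> Pairs N"
    then show "AE \<omega> in clock_space N. 0 < \<omega> e"
      unfolding clock_space_eq using pos prob_space_clock_law[OF N] by (intro AE_PiM_component) auto
  qed
  then show ?thesis by (auto simp: positive_clocks_def)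
qed

lemma measure_Int_positive_clocks:
  "0 < N \<Longrightarrow> Z \<in> sets (clock_space N) \<Longrightarrow> measure (clock_space N) (Z \<inter> positive_clocks N) = measure (clock_space N) Z"
  using AE_positive_clocks[of N] by (intro measure_eq_AE) (auto simp: sets_positive_clocks)

text \<open>At time \<open>0\<close> no clock has rung almost surely, so every event observed at time \<open>0\<close> is trivial.\<close>

lemma measure_at_zero_trivial:
  assumes N: "0 < N"
  shows "measure (clock_space N) {\<omega>\<in>space (clock_space N). Q (Ssol N a \<omega> 0) (Csol N a \<omega> 0)} \<in> {0, 1}"
proof -
  interpret prob_space "clock_space N" by (rule prob_space_clock_space[OF N])
  let ?Z = "{\<omega>\<in>space (clock_space N). Q (Ssol N a \<omega> 0) (Csol N a \<omega> 0)}"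
  define S0 where "S0 = {v. v < N \<and> real (card (cluster {} v)) < a}"
  have "Ssol N a \<omega> 0 = S0 \<and> Csol N a \<omega> 0 = {}" if "\<omega> \<in> positive_clocks N" for \<omega>
  proof -
    have "links N a \<omega> 0 = {}"
      using that created_subset[of N a \<omega>] by (force simp: links_def positive_clocks_def)
    then have S: "Ssol N a \<omega> 0 = S0" by (simp add: Ssol_def S0_def)
    have "Pairs_on S0 \<subseteq> Pairs N" by (rule Pairs_on_subset) (auto simp: S0_def)
    then have "Csol N a \<omega> 0 = {}" using that S by (force simp: Csol_def positive_clocks_def)
    with S show ?thesis by simp
  qed
  then have "?Z \<inter> positive_clocks N = (if Q S0 {} then positive_clocks N else {})"
    by (auto simp: positive_clocks_def)
  moreover have "prob (positive_clocks N) = 1"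
    using measure_Int_positive_clocks[OF N sets.top] prob_space
    by (simp add: positive_clocks_def Int_absorb1)
  ultimately have "prob (?Z \<inter> positive_clocks N) \<in> {0, 1}" by simp
  then show ?thesis using measure_Int_positive_clocks[OF N sets_Ssol_Csol] by simp
qed

lemma law_at_time_zero:
  assumes N: "0 < N" and S: "S \<subseteq> {..<N}" and X: "X \<in> sets (clock_space N)"
  defines "M \<equiv> clock_space N"
  shows "measure M (X \<inter> {\<omega>\<in>space M. Ssol N a \<omega> 0 = S \<and> Csol N a \<omega> 0 = G}) =
    ER_cond a S (pN N 0) G * measure M (X \<inter> {\<omega>\<in>space M. Ssol N a \<omega> 0 = S})"
proof -
  interpret prob_space M unfolding M_def by (rule prob_space_clock_space[OF N])
  let ?E = "{\<omega>\<in>space M. Ssol N a \<omega> 0 = S}" and ?EC = "{\<omega>\<in>space M. Ssol N a \<omega> 0 = S \<and> Csol N a \<omega> 0 = G}"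
  have triv: "prob ?E = 0 \<or> prob ?E = 1" "prob ?EC = 0 \<or> prob ?EC = 1"
    using measure_at_zero_trivial[OF N, where a = a and Q = "\<lambda>S' C. S' = S"]
      measure_at_zero_trivial[OF N, where a = a and Q = "\<lambda>S' C. S' = S \<and> C = G"]
    unfolding M_def by auto
  have ev: "?E \<in> events" "?EC \<in> events" "X \<in> events"
    using X sets_Ssol_Csol[where Q = "\<lambda>S' C. S' = S" and N = N and a = a and t = 0]
      sets_Ssol_Csol[where Q = "\<lambda>S' C. S' = S \<and> C = G" and N = N and a = a and t = 0]
    unfolding M_def by blast+
  have "prob (X \<inter> ?EC) = prob X * prob ?EC"
    by (rule prob_Int_trivial_event[OF ev(2) triv(2) ev(3)])
  also have "\<dots> = ER_cond a S (pN N 0) G * (prob X * prob ?E)"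
    using law_fixed_time[OF N S order_refl] unfolding M_def by simp
  also have "prob X * prob ?E = prob (X \<inter> ?E)"
    by (rule prob_Int_trivial_event[OF ev(1) triv(1) ev(3), symmetric])
  finally show ?thesis .
qed

text \<open>The event of \<open>\<F>\<^sup>S\<^sub>t\<close> that the pairs of \<open>S\<close> whose clocks have rung by time \<open>t\<close> are those of \<open>G\<close>,
  written with the truncated clocks \<open>e \<one>\<^sub>{e \<le> t}\<close> generating \<open>\<F>\<^sup>S\<^sub>t\<close>; a clock ringing at time \<open>0\<close>
  is invisible in this form, which is harmless since it happens with probability \<open>0\<close>.\<close>

definition rang_event :: "nat \<Rightarrow> nat set \<Rightarrow> real \<Rightarrow> (nat \<times> nat) set \<Rightarrow> (nat \<times> nat \<Rightarrow> real) set" where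
  "rang_event N S t G = {\<omega>\<in>space (clock_space N).
      \<forall>e\<in>Pairs_on S. ((if \<omega> e \<le> t then \<omega> e else 0) \<noteq> 0) = (e \<in> G)}"

lemma rang_event_FS:
  assumes S: "S \<subseteq> {..<N}"
  shows "rang_event N S t G \<in> FS N S t"
proof -
  let ?sp = "space (clock_space N)" and ?X = "\<lambda>e \<omega>. if \<omega> e \<le> t then \<omega> e else 0"
  let ?gen = "\<Union>e\<in>Pairs_on S. {?X e -` B \<inter> ?sp |B. B \<in> sets borel}"
  have sa: "sigma_algebra ?sp (sigma_sets ?sp ?gen)"
    by (rule sigma_algebra_sigma_sets) auto
  have one: "{\<omega>\<in>?sp. (?X e \<omega> \<noteq> 0) = (e \<in> G)} \<in> sigma_sets ?sp ?gen" if e: "e \<in> Pairs_on S" for e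
  proof -
    have "{\<omega>\<in>?sp. (?X e \<omega> \<noteq> 0) = (e \<in> G)} = ?X e -` (if e \<in> G then - {0} else {0}) \<inter> ?sp"
      by (auto split: if_splits)
    also have "\<dots> \<in> ?gen"
      by (rule UN_I[OF e], rule CollectI, rule exI[of _ "if e \<in> G then - {0} else {0}"]) simp
    finally show ?thesis by (rule sigma_sets.Basic)
  qed
  then have "{\<omega>\<in>?sp. \<forall>e\<in>Pairs_on S. (?X e \<omega> \<noteq> 0) = (e \<in> G)} \<in> sigma_sets ?sp ?gen"
    by (rule algebra.sets_Collect_finite_All[OF sigma_algebra.axioms(1)[OF sa]])
      (use one finite_Pairs_on[OF finite_subset[OF S finite_lessThan]] in auto)
  then show ?thesis by (simp add: rang_event_def FS_def filt_def)
qed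

lemma rang_event_iff:
  assumes pos: "\<omega> \<in> positive_clocks N" and S: "S \<subseteq> {..<N}" and G: "G \<subseteq> Pairs_on S"
  shows "\<omega> \<in> rang_event N S t G \<longleftrightarrow> rang_within S \<omega> t = G"
proof -
  have "((if \<omega> e \<le> t then \<omega> e else 0) \<noteq> 0) \<longleftrightarrow> \<omega> e \<le> t" if "e \<in> Pairs_on S" for e
  proof -
    have "0 < \<omega> e" using pos Pairs_on_subset[OF S] that by (auto simp: positive_clocks_def)
    then show ?thesis by simp
  qed
  then have "\<omega> \<in> rang_event N S t G \<longleftrightarrow> (\<forall>e\<in>Pairs_on S. \<omega> e \<le> t \<longleftrightarrow> e \<in> G)"
    using pos unfolding rang_event_def positive_clocks_def by auto
  also have "\<dots> \<longleftrightarrow> rang_within S \<omega> t = G"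
    using G unfolding rang_within_def by blast
  finally show ?thesis .
qed

lemma rang_event_Int_Ssol:
  assumes S: "S \<subseteq> {..<N}" and G: "G \<subseteq> Pairs_on S"
  shows "rang_event N S t G \<inter> {\<omega>\<in>space (clock_space N). Ssol N a \<omega> t = S} \<inter> positive_clocks N =
    {\<omega>\<in>space (clock_space N). Ssol N a \<omega> t = S \<and> Csol N a \<omega> t = G} \<inter> positive_clocks N"
proof (intro set_eqI)
  fix \<omega>
  show "\<omega> \<in> rang_event N S t G \<inter> {\<omega>\<in>space (clock_space N). Ssol N a \<omega> t = S} \<inter> positive_clocks N \<longleftrightarrow>
    \<omega> \<in> {\<omega>\<in>space (clock_space N). Ssol N a \<omega> t = S \<and> Csol N a \<omega> t = G} \<inter> positive_clocks N"
  proof (cases "\<omega> \<in> positive_clocks N")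
    case pos: True
    then have "\<omega> \<in> space (clock_space N)" unfolding positive_clocks_def by blast
    then show ?thesis
      using pos rang_event_iff[OF pos S G] Csol_eq_rang_within[of N a \<omega> t] by blast
  qed simp
qed

lemma filt_subset_sets: "filt N P t \<subseteq> sets (clock_space N)"
  unfolding filt_def
proof (rule sets.sigma_sets_subset)
  have "(\<lambda>\<omega>. if \<omega> e \<le> t then \<omega> e else 0) \<in> borel_measurable (clock_space N)" for e
    using measurable_clock[of e N] by measurable
  then show "(\<Union>e\<in>P. {(\<lambda>\<omega>. if \<omega> e \<le> t then \<omega> e else 0) -` B \<inter> space (clock_space N) |B. B \<in> sets borel})
      \<subseteq> sets (clock_space N)"
    by (auto intro: measurable_sets)
qed

lemma gelation_stopping_time_measurable:
  assumes "gelation_stopping_time N a \<tau>"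
  shows "\<tau> \<in> borel_measurable (clock_space N)"
proof (rule borel_measurableI_le)
  fix y :: ennreal
  show "{x \<in> space (clock_space N). \<tau> x \<le> y} \<in> sets (clock_space N)"
  proof (cases y)
    case (real r)
    then show ?thesis
      using assms filt_subset_sets unfolding gelation_stopping_time_def F_def by fastforce
  qed simp
qed

lemma law_given_independent_event:
  fixes a t :: real and S :: "nat set" and G :: "(nat \<times> nat) set"
  assumes N: "0 < N" and S: "S \<subseteq> {..<N}" and t: "0 \<le> t" and X: "X \<in> sets (clock_space N)"
  defines "M \<equiv> clock_space N"
  defines "E \<equiv> {\<omega>\<in>space M. Ssol N a \<omega> t = S}"
    and "EC \<equiv> {\<omega>\<in>space M. Ssol N a \<omega> t = S \<and> Csol N a \<omega> t = G}"
  assumes indep: "\<And>B. B \<in> FS N S t \<Longrightarrow>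
    measure M (X \<inter> B \<inter> E) * measure M E = measure M (X \<inter> E) * measure M (B \<inter> E)"
  shows "measure M (X \<inter> EC) = ER_cond a S (pN N t) G * measure M (X \<inter> E)"
proof (cases "G \<subseteq> Pairs_on S")
  case False
  then have "EC = {}" "ER_cond a S (pN N t) G = 0"
    using rang_within_subset unfolding EC_def Csol_eq_rang_within ER_cond_def by auto
  then show ?thesis by simp
next
  case True
  interpret prob_space M unfolding M_def by (rule prob_space_clock_space[OF N])
  let ?B = "rang_event N S t G" and ?P = "positive_clocks N" and ?c = "ER_cond a S (pN N t) G"
  have ev: "E \<in> events" "EC \<in> events" "?B \<in> events" "X \<in> events" "?P \<in> events"
    using sets_Ssol_Csol[where Q = "\<lambda>S' C. S' = S" and N = N and a = a and t = t]
      sets_Ssol_Csol[where Q = "\<lambda>S' C. S' = S \<and> C = G" and N = N and a = a and t = t]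
      rang_event_FS[OF S] filt_subset_sets X sets_positive_clocks
    unfolding M_def E_def EC_def FS_def by blast+
  have BP: "?B \<inter> E \<inter> ?P = EC \<inter> ?P"
    unfolding E_def EC_def M_def by (rule rang_event_Int_Ssol[OF S True])
  have mP: "Z \<in> events \<Longrightarrow> prob (Z \<inter> ?P) = prob Z" for Z
    using measure_Int_positive_clocks[OF N] unfolding M_def .
  have "prob (X \<inter> ?B \<inter> E) = prob (X \<inter> ?B \<inter> E \<inter> ?P)" using ev by (simp add: mP)
  also have "X \<inter> ?B \<inter> E \<inter> ?P = X \<inter> EC \<inter> ?P" using BP by blast
  also have "prob \<dots> = prob (X \<inter> EC)" using ev by (simp add: mP)
  finally have m1: "prob (X \<inter> ?B \<inter> E) = prob (X \<inter> EC)" .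
  have "prob (?B \<inter> E) = prob (?B \<inter> E \<inter> ?P)" using ev by (simp add: mP)
  also have "\<dots> = prob EC" using ev BP by (simp add: mP)
  also have "\<dots> = ?c * prob E"
    using law_fixed_time[OF N S t] unfolding M_def E_def EC_def .
  finally have m2: "prob (?B \<inter> E) = ?c * prob E" .
  have eq: "prob (X \<inter> EC) * prob E = prob (X \<inter> E) * (?c * prob E)"
    using indep[OF rang_event_FS[OF S, of t G]] unfolding m1 m2 .
  show ?thesis
  proof (cases "prob E = 0")
    case True
    have "prob (X \<inter> EC) \<le> prob E" "prob (X \<inter> E) \<le> prob E"
      using ev by (auto intro!: finite_measure_mono simp: E_def EC_def)
    then show ?thesis using True measure_nonneg[of M "X \<inter> EC"] measure_nonneg[of M "X \<inter> E"] by simp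
  next
    case False
    then show ?thesis using eq by simp
  qed
qed

lemma law_on_stopping_slice:
  fixes a t :: real and S :: "nat set" and G :: "(nat \<times> nat) set" and A :: "ennreal set"
  assumes gel: "gelation_stopping_time N a \<tau>"
    and N: "0 < N" and S: "S \<subseteq> {..<N}" and t: "0 \<le> t" and A: "A \<in> sets borel" and A0: "0 \<notin> A"
  defines "M \<equiv> clock_space N"
  defines "X \<equiv> {\<omega>\<in>space M. \<tau> \<omega> \<le> ennreal t \<and> \<tau> \<omega> \<in> A}"
    and "E \<equiv> {\<omega>\<in>space M. Ssol N a \<omega> t = S}"
    and "EC \<equiv> {\<omega>\<in>space M. Ssol N a \<omega> t = S \<and> Csol N a \<omega> t = G}"
  shows "measure M (X \<inter> EC) = ER_cond a S (pN N t) G * measure M (X \<inter> E)"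
  unfolding M_def E_def EC_def
proof (rule law_given_independent_event[OF N S t])
  have [measurable]: "\<tau> \<in> borel_measurable (clock_space N)" "A \<in> sets borel"
    using gelation_stopping_time_measurable[OF gel] A .
  show "X \<in> sets (clock_space N)" unfolding X_def M_def by measurable
  have "X = {\<omega>\<in>space M. (if \<tau> \<omega> \<le> ennreal t then \<tau> \<omega> else 0) \<in> A}"
    using A0 unfolding X_def by auto
  then show "measure (clock_space N) (X \<inter> B \<inter> {\<omega>\<in>space (clock_space N). Ssol N a \<omega> t = S}) *
      measure (clock_space N) {\<omega>\<in>space (clock_space N). Ssol N a \<omega> t = S} =
      measure (clock_space N) (X \<inter> {\<omega>\<in>space (clock_space N). Ssol N a \<omega> t = S}) *
      measure (clock_space N) (B \<inter> {\<omega>\<in>space (clock_space N). Ssol N a \<omega> t = S})"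
    if "B \<in> FS N S t" for B
    using gel S t A that unfolding gelation_stopping_time_def Let_def M_def by simp
qed

section \<open>The conditioned Erdos-Renyi law\<close>

lemma ER_cond_nonneg_le_1:
  assumes "finite S" "0 \<le> p" "p \<le> 1"
  shows "0 \<le> ER_cond a S p G \<and> ER_cond a S p G \<le> 1"
proof -
  let ?I = "{H. H \<subseteq> Pairs_on S \<and> no_big a S H}"
  have finI: "finite ?I"
    by (rule finite_subset[of _ "Pow (Pairs_on S)"]) (auto simp: finite_Pairs_on[OF assms(1)])
  have w: "0 \<le> er_weight S p H" for H using assms by (simp add: er_weight_def)
  show ?thesis
  proof (cases "G \<in> ?I")
    case True
    have "er_weight S p G \<le> sum (er_weight S p) ?I"
      using True finI w by (intro member_le_sum) auto
    then show ?thesis using True w[of G]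
      by (cases "sum (er_weight S p) ?I = 0") (auto simp: ER_cond_def divide_le_eq_1)
  qed (auto simp: ER_cond_def)
qed

text \<open>The empty graph keeps the normalising sum positive as long as \<open>p < 1\<close>.\<close>

lemma tendsto_ER_cond:
  assumes S: "finite S" and lim: "f \<longlonglongrightarrow> p" and p: "0 \<le> p" "p < 1"
  shows "(\<lambda>n. ER_cond a S (f n) G) \<longlonglongrightarrow> ER_cond a S p G"
proof (cases "G \<subseteq> Pairs_on S \<and> no_big a S G")
  case True
  let ?I = "{H. H \<subseteq> Pairs_on S \<and> no_big a S H}"
  have finI: "finite ?I"
    by (rule finite_subset[of _ "Pow (Pairs_on S)"]) (auto simp: finite_Pairs_on[OF S])
  have w: "(\<lambda>n. er_weight S (f n) H) \<longlonglongrightarrow> er_weight S p H" for H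
    unfolding er_weight_def by (intro tendsto_intros lim)
  have "{} \<in> ?I"
  proof -
    have "card (cluster {} v) \<le> card (cluster G v)" for v
      using True finite_subset[OF _ finite_Pairs_on[OF S]] by (intro card_cluster_mono) auto
    then show ?thesis
      using True by (auto simp: no_big_def intro: le_less_trans[rotated] simp del: of_nat_le_iff)
  qed
  then have "er_weight S p {} \<le> sum (er_weight S p) ?I"
    using p finI by (intro member_le_sum) (auto simp: er_weight_def)
  moreover have "0 < er_weight S p {}" using p by (simp add: er_weight_def)
  ultimately have "sum (er_weight S p) ?I \<noteq> 0" by linarith
  then have "(\<lambda>n. er_weight S (f n) G / sum (er_weight S (f n)) ?I) \<longlonglongrightarrow> er_weight S p G / sum (er_weight S p) ?I"
    by (intro tendsto_divide w tendsto_sum)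
  then show ?thesis using True by (simp add: ER_cond_def)
next
  case False
  then have "ER_cond a S q G = 0" for q unfolding ER_cond_def by auto
  then show ?thesis by simp
qed

lemma borel_measurable_ER_cond [measurable]: "(\<lambda>p. ER_cond a S p G) \<in> borel_measurable borel"
proof (cases "G \<subseteq> Pairs_on S \<and> no_big a S G")
  case True
  then show ?thesis by (simp add: ER_cond_def er_weight_def)
next
  case False
  then have "ER_cond a S p G = 0" for p unfolding ER_cond_def by auto
  then show ?thesis by simp
qed

section \<open>Passage from dyadic times to the stopping time\<close>

lemma dyadic_ceiling_enn2real_eq_Suc_iff:
  fixes x :: ennreal
  assumes "x < \<infinity>"
  shows "dyadic_ceiling n (enn2real x) = real (Suc j) / 2 ^ n \<longleftrightarrow>
    ennreal (real j / 2 ^ n) < x \<and> x \<le> ennreal (real (Suc j) / 2 ^ n)"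
proof -
  obtain r where r: "x = ennreal r" "0 \<le> r" using assms by (cases x) auto
  then show ?thesis
    using dyadic_ceiling_eq_iff[of r n "Suc j"] by (simp add: ennreal_less_iff del: of_nat_Suc)
qed

locale stopped_configuration =
  fixes N :: nat and a :: real and \<tau> :: "(nat \<times> nat \<Rightarrow> real) \<Rightarrow> ennreal"
    and T :: "real set" and S :: "nat set" and G :: "(nat \<times> nat) set"
  assumes N: "0 < N" and S: "S \<subseteq> {..<N}" and T [measurable]: "T \<in> sets borel"
    and gel: "gelation_stopping_time N a \<tau>"
begin

lemma measurable_tau [measurable]: "\<tau> \<in> borel_measurable (clock_space N)"
  by (rule gelation_stopping_time_measurable[OF gel])

sublocale prob_space "clock_space N"
  by (rule prob_space_clock_space[OF N])

definition observed_at :: "((nat \<times> nat \<Rightarrow> real) \<Rightarrow> real) \<Rightarrow> (nat \<times> nat \<Rightarrow> real) set" where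
  "observed_at \<theta> = {\<omega>\<in>space (clock_space N). \<tau> \<omega> < \<infinity> \<and> enn2real (\<tau> \<omega>) \<in> T \<and>
     Ssol N a \<omega> (\<theta> \<omega>) = S \<and> Csol N a \<omega> (\<theta> \<omega>) = G}"

definition predicted_at :: "((nat \<times> nat \<Rightarrow> real) \<Rightarrow> real) \<Rightarrow> (nat \<times> nat \<Rightarrow> real) \<Rightarrow> real" where
  "predicted_at \<theta> \<omega> = indicator {\<omega>. \<tau> \<omega> < \<infinity> \<and> enn2real (\<tau> \<omega>) \<in> T \<and> Ssol N a \<omega> (\<theta> \<omega>) = S} \<omega>
     * ER_cond a S (pN N (\<theta> \<omega>)) G"

lemma sets_observed_at:
  assumes [measurable]: "\<theta> \<in> borel_measurable (clock_space N)"
  shows "observed_at \<theta> \<in> sets (clock_space N)"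
proof -
  have [measurable]: "Measurable.pred (clock_space N) (\<lambda>\<omega>. Ssol N a \<omega> (\<theta> \<omega>) = S \<and> Csol N a \<omega> (\<theta> \<omega>) = G)"
    by (rule pred_sol_clock) measurable
  show ?thesis unfolding observed_at_def by measurable
qed

lemma borel_measurable_predicted_at:
  assumes [measurable]: "\<theta> \<in> borel_measurable (clock_space N)"
  shows "predicted_at \<theta> \<in> borel_measurable (clock_space N)"
proof -
  have [measurable]: "Measurable.pred (clock_space N) (\<lambda>\<omega>. Ssol N a \<omega> (\<theta> \<omega>) = S)"
    by (rule pred_sol_clock[where Q = "\<lambda>S' C. S' = S"]) measurable
  have "(\<lambda>\<omega>. indicator {\<omega>\<in>space (clock_space N). \<tau> \<omega> < \<infinity> \<and> enn2real (\<tau> \<omega>) \<in> T \<and> Ssol N a \<omega> (\<theta> \<omega>) = S} \<omega>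
      * ER_cond a S (pN N (\<theta> \<omega>)) G) \<in> borel_measurable (clock_space N)"
    unfolding pN_def by measurable
  then show ?thesis
    by (rule measurable_cong[THEN iffD1, rotated]) (simp add: predicted_at_def indicator_def)
qed

lemma predicted_at_bounds:
  "0 \<le> \<theta> \<omega> \<Longrightarrow> 0 \<le> predicted_at \<theta> \<omega> \<and> predicted_at \<theta> \<omega> \<le> 1"
  using ER_cond_nonneg_le_1[OF finite_subset[OF S finite_lessThan], of "pN N (\<theta> \<omega>)" a G]
  by (auto simp: predicted_at_def indicator_def pN_def)

definition dyadic_time :: "nat \<Rightarrow> (nat \<times> nat \<Rightarrow> real) \<Rightarrow> real" where
  "dyadic_time n \<omega> = dyadic_ceiling n (enn2real (\<tau> \<omega>))"

lemma measurable_dyadic_time [measurable]: "dyadic_time n \<in> borel_measurable (clock_space N)"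
  unfolding dyadic_time_def by measurable

definition piece :: "nat \<Rightarrow> nat \<Rightarrow> (nat \<times> nat \<Rightarrow> real) set" where
  "piece n k = {\<omega>\<in>space (clock_space N). \<tau> \<omega> < \<infinity> \<and> enn2real (\<tau> \<omega>) \<in> T \<and>
     dyadic_time n \<omega> = real k / 2 ^ n}"

lemma sets_piece [measurable]: "piece n k \<in> sets (clock_space N)"
  unfolding piece_def by measurable

lemma piece_Suc_eq:
  "piece n (Suc j) = {\<omega>\<in>space (clock_space N). \<tau> \<omega> \<le> ennreal (real (Suc j) / 2 ^ n) \<and>
     \<tau> \<omega> \<in> {x. ennreal (real j / 2 ^ n) < x \<and> enn2real x \<in> T}}"
proof -
  have "\<tau> \<omega> < \<infinity>" if "\<tau> \<omega> \<le> ennreal (real (Suc j) / 2 ^ n)" for \<omega>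
    using that by (simp add: le_less_trans)
  then show ?thesis
    unfolding piece_def dyadic_time_def using dyadic_ceiling_enn2real_eq_Suc_iff by auto
qed

lemma law_on_piece:
  "measure (clock_space N) (piece n k \<inter>
      {\<omega>\<in>space (clock_space N). Ssol N a \<omega> (real k / 2 ^ n) = S \<and> Csol N a \<omega> (real k / 2 ^ n) = G}) =
   ER_cond a S (pN N (real k / 2 ^ n)) G *
     measure (clock_space N) (piece n k \<inter> {\<omega>\<in>space (clock_space N). Ssol N a \<omega> (real k / 2 ^ n) = S})"
proof (cases k)
  case 0
  \<comment> \<open>The gelation property cannot isolate \<open>\<tau> = 0\<close>: the truncated time \<open>\<tau> \<one>\<^sub>{\<tau> \<le> 0}\<close>
    also vanishes off this event. At time \<open>0\<close> every observed event is trivial instead.\<close>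
  then show ?thesis using law_at_time_zero[OF N S sets_piece] by simp
next
  case (Suc j)
  have A: "{x. ennreal (real j / 2 ^ n) < x \<and> enn2real x \<in> T} \<in> sets borel" by measurable
  show ?thesis
    unfolding Suc piece_Suc_eq by (rule law_on_stopping_slice[OF gel N S _ A]) auto
qed

lemma piece_covering:
  assumes "\<omega> \<in> space (clock_space N)" "\<tau> \<omega> < \<infinity>" "enn2real (\<tau> \<omega>) \<in> T"
  shows "\<omega> \<in> piece n (nat \<lceil>enn2real (\<tau> \<omega>) * 2 ^ n\<rceil>)"
  using assms by (simp add: piece_def dyadic_time_def dyadic_ceiling_eq_nat)

lemma disjoint_family_piece: "disjoint_family (piece n)"
  by (auto simp: disjoint_family_on_def piece_def divide_cancel_right)

lemma dyadic_time_piece: "\<omega> \<in> piece n k \<Longrightarrow> dyadic_time n \<omega> = real k / 2 ^ n"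
  by (simp add: piece_def)

lemma observed_at_dyadic_time_eq:
  "observed_at (dyadic_time n) = (\<Union>k. piece n k \<inter> {\<omega>\<in>space (clock_space N).
     Ssol N a \<omega> (real k / 2 ^ n) = S \<and> Csol N a \<omega> (real k / 2 ^ n) = G})"
  (is "_ = (\<Union>k. ?U k)")
proof (intro set_eqI iffI)
  fix \<omega> assume "\<omega> \<in> observed_at (dyadic_time n)"
  then have \<omega>: "\<omega> \<in> space (clock_space N)" "\<tau> \<omega> < \<infinity>" "enn2real (\<tau> \<omega>) \<in> T"
    "Ssol N a \<omega> (dyadic_time n \<omega>) = S" "Csol N a \<omega> (dyadic_time n \<omega>) = G"
    by (simp_all add: observed_at_def)
  let ?k = "nat \<lceil>enn2real (\<tau> \<omega>) * 2 ^ n\<rceil>"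
  have k: "\<omega> \<in> piece n ?k" by (rule piece_covering[OF \<omega>(1-3)])
  then have "\<omega> \<in> ?U ?k" using \<omega> dyadic_time_piece[OF k] by simp
  then show "\<omega> \<in> (\<Union>k. ?U k)" by (rule UN_I[OF UNIV_I])
next
  fix \<omega> assume "\<omega> \<in> (\<Union>k. ?U k)"
  then obtain k where k: "\<omega> \<in> ?U k" by blast
  then show "\<omega> \<in> observed_at (dyadic_time n)"
    using dyadic_time_piece[of \<omega> n k] by (simp add: observed_at_def piece_def)
qed

lemma measure_observed_at_dyadic_time:
  "prob (observed_at (dyadic_time n)) = integral\<^sup>L (clock_space N) (predicted_at (dyadic_time n))"
proof -
  let ?t = "\<lambda>k::nat. real k / 2 ^ n"
  let ?V = "\<lambda>k. piece n k \<inter> {\<omega>\<in>space (clock_space N). Ssol N a \<omega> (?t k) = S}"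
  let ?U = "\<lambda>k. piece n k \<inter> {\<omega>\<in>space (clock_space N). Ssol N a \<omega> (?t k) = S \<and> Csol N a \<omega> (?t k) = G}"
  show ?thesis
    unfolding observed_at_dyadic_time_eq
  proof (rule measure_UN_proportional)
    show "?V k \<in> events" "?U k \<in> events" for k
      using sets_Ssol_Csol[where Q = "\<lambda>S' C. S' = S"] sets_Ssol_Csol[where Q = "\<lambda>S' C. S' = S \<and> C = G"]
      by (auto intro: sets.Int)
    show "disjoint_family ?V"
      using disjoint_family_piece by (rule disjoint_family_subset) auto
    show "prob (?U k) = ER_cond a S (pN N (?t k)) G * prob (?V k)" for k
      by (rule law_on_piece)
    show "0 \<le> ER_cond a S (pN N (?t k)) G" for k
      using ER_cond_nonneg_le_1[OF finite_subset[OF S finite_lessThan]] by (simp add: pN_def)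
    show "predicted_at (dyadic_time n) \<omega> = ER_cond a S (pN N (?t k)) G" if "\<omega> \<in> ?V k" for \<omega> k
    proof -
      have p: "\<omega> \<in> piece n k" and s: "Ssol N a \<omega> (?t k) = S" using that by auto
      then have "\<tau> \<omega> < \<infinity> \<and> enn2real (\<tau> \<omega>) \<in> T" by (simp add: piece_def)
      then show ?thesis using s dyadic_time_piece[OF p] by (simp add: predicted_at_def)
    qed
    show "predicted_at (dyadic_time n) \<omega> = 0" if \<omega>: "\<omega> \<in> space (clock_space N)" "\<omega> \<notin> (\<Union>k. ?V k)" for \<omega>
    proof -
      have "\<not> (\<tau> \<omega> < \<infinity> \<and> enn2real (\<tau> \<omega>) \<in> T \<and> Ssol N a \<omega> (dyadic_time n \<omega>) = S)"
      proof
        assume h: "\<tau> \<omega> < \<infinity> \<and> enn2real (\<tau> \<omega>) \<in> T \<and> Ssol N a \<omega> (dyadic_time n \<omega>) = S"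
        let ?k = "nat \<lceil>enn2real (\<tau> \<omega>) * 2 ^ n\<rceil>"
        have p: "\<omega> \<in> piece n ?k" using piece_covering \<omega>(1) h by blast
        then have "\<omega> \<in> ?V ?k" using h \<omega>(1) dyadic_time_piece[OF p] by simp
        then show False using \<omega>(2) by blast
      qed
      then show ?thesis by (simp add: predicted_at_def)
    qed
  qed auto
qed

lemma eventually_sol_dyadic_time:
  "eventually (\<lambda>n. Ssol N a \<omega> (dyadic_time n \<omega>) = Ssol N a \<omega> (enn2real (\<tau> \<omega>)) \<and>
     Csol N a \<omega> (dyadic_time n \<omega>) = Csol N a \<omega> (enn2real (\<tau> \<omega>))) sequentially"
proof -
  let ?r = "enn2real (\<tau> \<omega>)"
  obtain \<delta> where \<delta>: "\<delta> > 0" "\<And>s. ?r \<le> s \<Longrightarrow> s < ?r + \<delta> \<Longrightarrow> ring_pattern N s \<omega> = ring_pattern N ?r \<omega>"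
    using ring_pattern_right_constant by blast
  have "eventually (\<lambda>n. dyadic_ceiling n ?r < ?r + \<delta>) sequentially"
    using tendsto_dyadic_ceiling by (rule order_tendstoD) (simp add: \<delta>(1))
  then show ?thesis
  proof eventually_elim
    case (elim n)
    then have "ring_pattern N (dyadic_time n \<omega>) \<omega> = ring_pattern N ?r \<omega>"
      using \<delta>(2) dyadic_ceiling_ge unfolding dyadic_time_def by blast
    from sol_eq_if_ring_pattern_eq[OF this] show ?case by simp
  qed
qed

lemma measure_observed_at_stopping_time:
  "prob (observed_at (\<lambda>\<omega>. enn2real (\<tau> \<omega>))) = integral\<^sup>L (clock_space N) (predicted_at (\<lambda>\<omega>. enn2real (\<tau> \<omega>)))"
proof (rule measure_eq_integral_limit[where A = "\<lambda>n. observed_at (dyadic_time n)" and f = "\<lambda>n. predicted_at (dyadic_time n)"])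
  show "observed_at (dyadic_time n) \<in> events" "predicted_at (dyadic_time n) \<in> borel_measurable (clock_space N)" for n
    by (simp_all add: sets_observed_at borel_measurable_predicted_at)
  show "observed_at (\<lambda>\<omega>. enn2real (\<tau> \<omega>)) \<in> events"
    "predicted_at (\<lambda>\<omega>. enn2real (\<tau> \<omega>)) \<in> borel_measurable (clock_space N)"
    by (simp_all add: sets_observed_at borel_measurable_predicted_at)
  show "\<bar>predicted_at (dyadic_time n) \<omega>\<bar> \<le> 1" for n \<omega>
  proof -
    have "0 \<le> dyadic_time n \<omega>"
      using dyadic_ceiling_ge[of "enn2real (\<tau> \<omega>)" n] enn2real_nonneg[of "\<tau> \<omega>"]
      unfolding dyadic_time_def by linarith
    then show ?thesis using predicted_at_bounds by (simp add: abs_le_iff)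
  qed
  show "prob (observed_at (dyadic_time n)) = integral\<^sup>L (clock_space N) (predicted_at (dyadic_time n))" for n
    by (rule measure_observed_at_dyadic_time)
  fix \<omega>
  let ?r = "enn2real (\<tau> \<omega>)"
  note ev = eventually_sol_dyadic_time[of \<omega>]
  show "(\<lambda>n. indicator (observed_at (dyadic_time n)) \<omega> :: real) \<longlonglongrightarrow> indicator (observed_at (\<lambda>\<omega>. enn2real (\<tau> \<omega>))) \<omega>"
    by (rule tendsto_eventually) (use ev in \<open>eventually_elim, simp add: observed_at_def indicator_def\<close>)
  let ?I = "indicator {\<omega>. \<tau> \<omega> < \<infinity> \<and> enn2real (\<tau> \<omega>) \<in> T \<and> Ssol N a \<omega> (enn2real (\<tau> \<omega>)) = S} \<omega> :: real"
  have "(\<lambda>n. pN N (dyadic_time n \<omega>)) \<longlonglongrightarrow> pN N ?r"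
    unfolding pN_def dyadic_time_def using N by (intro tendsto_intros tendsto_dyadic_ceiling) auto
  then have "(\<lambda>n. ?I * ER_cond a S (pN N (dyadic_time n \<omega>)) G) \<longlonglongrightarrow> ?I * ER_cond a S (pN N ?r) G"
    using finite_subset[OF S finite_lessThan]
    by (intro tendsto_mult tendsto_const tendsto_ER_cond) (auto simp: pN_def)
  moreover have "eventually (\<lambda>n. ?I * ER_cond a S (pN N (dyadic_time n \<omega>)) G = predicted_at (dyadic_time n) \<omega>) sequentially"
    using ev by eventually_elim (simp add: predicted_at_def indicator_def)
  ultimately show "(\<lambda>n. predicted_at (dyadic_time n) \<omega>) \<longlonglongrightarrow> predicted_at (\<lambda>\<omega>. enn2real (\<tau> \<omega>)) \<omega>"
    by (simp add: Lim_transform_eventually predicted_at_def)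
qed

end

theorem lemma4p3:
  fixes \<alpha> :: "nat \<Rightarrow> real" and N :: nat and \<tau> :: "(nat \<times> nat \<Rightarrow> real) \<Rightarrow> ennreal"
  assumes "filterlim \<alpha> at_top sequentially"
    and "(\<lambda>n. \<alpha> n / real n) \<longlonglongrightarrow> 0"
    and "N \<ge> 2"
    and "gelation_stopping_time N (\<alpha> N) \<tau>"
  shows "\<forall>T \<in> sets borel. \<forall>S. S \<subseteq> {..<N} \<longrightarrow> (\<forall>G.
     measure (clock_space N) {\<omega> \<in> space (clock_space N). \<tau> \<omega> < \<infinity> \<and> enn2real (\<tau> \<omega>) \<in> T
        \<and> Ssol N (\<alpha> N) \<omega> (enn2real (\<tau> \<omega>)) = S \<and> Csol N (\<alpha> N) \<omega> (enn2real (\<tau> \<omega>)) = G}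
   = (\<integral>\<omega>. indicator {\<omega>. \<tau> \<omega> < \<infinity> \<and> enn2real (\<tau> \<omega>) \<in> T
            \<and> Ssol N (\<alpha> N) \<omega> (enn2real (\<tau> \<omega>)) = S} \<omega>
          * ER_cond (\<alpha> N) S (pN N (enn2real (\<tau> \<omega>))) G \<partial>clock_space N))"
proof (intro ballI allI impI)
  fix T :: "real set" and S :: "nat set" and G :: "(nat \<times> nat) set"
  assume "T \<in> sets borel" "S \<subseteq> {..<N}"
  then interpret stopped_configuration N "\<alpha> N" \<tau> T S G
    using assms(3,4) by unfold_locales auto
  show "measure (clock_space N) {\<omega> \<in> space (clock_space N). \<tau> \<omega> < \<infinity> \<and> enn2real (\<tau> \<omega>) \<in> T
        \<and> Ssol N (\<alpha> N) \<omega> (enn2real (\<tau> \<omega>)) = S \<and> Csol N (\<alpha> N) \<omega> (enn2real (\<tau> \<omega>)) = G}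
   = (\<integral>\<omega>. indicator {\<omega>. \<tau> \<omega> < \<infinity> \<and> enn2real (\<tau> \<omega>) \<in> T
            \<and> Ssol N (\<alpha> N) \<omega> (enn2real (\<tau> \<omega>)) = S} \<omega>
          * ER_cond (\<alpha> N) S (pN N (enn2real (\<tau> \<omega>))) G \<partial>clock_space N)"
    using measure_observed_at_stopping_time unfolding observed_at_def predicted_at_def .
qed

end
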